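(* Let $(a_k)_{k\in\mathbb{Z}}$ be real numbers, all but finitely many zero, and $D_0=\sum_{k}a_k\partial_k$. A function $\xi\in L^2(\mathbb{R}^{\mathbb{Z}},\nu_0^{gc})$ is $D_0$-closed if and only if, for every $N\ge 0$, the orthogonal projection $\mathrm{Proj}_{\mathcal{H}_N}\xi$ of $\xi$ onto the degree-$N$ subspace $\mathcal{H}_N$ is $D_0$-closed.
   Context: $\nu_0^{gc}=\bigotimes_{i\in\mathbb{Z}}\frac{1}{\sqrt{2\pi}}e^{-x_i^2/2}dx_i$ on $\mathbb{R}^{\mathbb{Z}}$. Hermite polynomials: $H_i(x)=\frac{(-1)^i}{i!}e^{x^2/2}\frac{d^i}{dx^i}e^{-x^2/2}$, $i\in\mathbb{N}$. A multi-index is a sequence $I=(i_n)_{n\in\mathbb{Z}}$ of nonnegative integers with finitely many nonzero entries; its degree is $|I|=\sum_n i_n$. $H_I(x)=\prod_{n}H_{i_n}(x_n)$, and $H_I=0$ if $I$ has a negative entry. $\mathcal{H}_N$ is the closed linear span of $\{H_I:|I|=N\}$; $L^2(\mathbb{R}^{\mathbb{Z}},\nu_0^{gc})=\bigoplus_{N\ge0}\mathcal{H}_N$. The shift is $(\tau x)_n=x_{n+1}$, $(\tau f)(x)=f(\tau x)$. $D_n=\sum_k a_k\partial_{k+n}$. A function $\xi\in L^2(\nu_0^{gc})$ is $D_0$-closed if $D_n(\tau^m\xi)=D_m(\tau^n\xi)$ in the weak sense (tested against polynomials in finitely many coordinates via the $L^2(\nu_0^{gc})$-adjoints $D_n^*$,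 $\partial_j^*=-\partial_j+x_j$) for all $m,n\in\mathbb{Z}$. *)

theory Defs
  imports "HOL-Probability.Probability"
begin

definition nu0 :: "(int \<Rightarrow> real) measure" where
  "nu0 = (\<Pi>\<^sub>M i\<in>(UNIV::int set). density lborel std_normal_density)"

definition L2 :: "((int \<Rightarrow> real) \<Rightarrow> real) \<Rightarrow> bool" where
  "L2 f \<longleftrightarrow> f \<in> borel_measurable nu0 \<and> integrable nu0 (\<lambda>x. (f x)\<^sup>2)"

definition supp :: "(int \<Rightarrow> nat) \<Rightarrow> int set" where
  "supp I = {n. I n \<noteq> 0}"

definition multi_index :: "(int \<Rightarrow> nat) \<Rightarrow> bool" where
  "multi_index I \<longleftrightarrow> finite (supp I)"

definition degree :: "(int \<Rightarrow> nat) \<Rightarrow> nat" where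
  "degree I = (\<Sum>n\<in>supp I. I n)"

definition hermite :: "nat \<Rightarrow> real \<Rightarrow> real" where
  "hermite i x = (-1) ^ i / fact i * exp (x\<^sup>2 / 2) * (deriv ^^ i) (\<lambda>t. exp (- t\<^sup>2 / 2)) x"

definition hermite_multi :: "(int \<Rightarrow> nat) \<Rightarrow> (int \<Rightarrow> real) \<Rightarrow> real" where
  "hermite_multi I x = (\<Prod>n\<in>supp I. hermite (I n) (x n))"

text \<open>P is the orthogonal projection of xi onto H_N = closed span of H_I, |I| = N.\<close>
definition is_proj :: "nat \<Rightarrow> ((int \<Rightarrow> real) \<Rightarrow> real) \<Rightarrow> ((int \<Rightarrow> real) \<Rightarrow> real) \<Rightarrow> bool" where
  "is_proj N xi P \<longleftrightarrow> L2 P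
     \<and> (\<forall>e>0. \<exists>A c. finite A \<and> (\<forall>I\<in>A. multi_index I \<and> degree I = N)
            \<and> (\<integral>x. (P x - (\<Sum>I\<in>A. c I * hermite_multi I x))\<^sup>2 \<partial>nu0) < e)
     \<and> (\<forall>I. multi_index I \<and> degree I = N \<longrightarrow>
            (\<integral>x. (xi x - P x) * hermite_multi I x \<partial>nu0) = 0)"

definition monomial :: "(int \<Rightarrow> nat) \<Rightarrow> (int \<Rightarrow> real) \<Rightarrow> real" where
  "monomial I x = (\<Prod>n\<in>supp I. x n ^ I n)"

definition cyl_poly :: "((int \<Rightarrow> real) \<Rightarrow> real) \<Rightarrow> bool" where
  "cyl_poly \<phi> \<longleftrightarrow> (\<exists>A c. finite A \<and> (\<forall>I\<in>A. multi_index I)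
      \<and> \<phi> = (\<lambda>x. \<Sum>I\<in>A. c I * monomial I x))"

definition partial :: "int \<Rightarrow> ((int \<Rightarrow> real) \<Rightarrow> real) \<Rightarrow> (int \<Rightarrow> real) \<Rightarrow> real" where
  "partial j \<phi> x = deriv (\<lambda>t. \<phi> (x(j := t))) (x j)"

definition Dstar :: "(int \<Rightarrow> real) \<Rightarrow> int \<Rightarrow> ((int \<Rightarrow> real) \<Rightarrow> real) \<Rightarrow> (int \<Rightarrow> real) \<Rightarrow> real" where
  "Dstar a n \<phi> x = (\<Sum>k\<in>{k. a k \<noteq> 0}. a k * (- partial (k + n) \<phi> x + x (k + n) * \<phi> x))"

definition shift :: "int \<Rightarrow> ((int \<Rightarrow> real) \<Rightarrow> real) \<Rightarrow> (int \<Rightarrow> real) \<Rightarrow> real" where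
  "shift m f x = f (\<lambda>n. x (n + m))"

definition D0_closed :: "(int \<Rightarrow> real) \<Rightarrow> ((int \<Rightarrow> real) \<Rightarrow> real) \<Rightarrow> bool" where
  "D0_closed a xi \<longleftrightarrow> (\<forall>m n \<phi>. cyl_poly \<phi> \<longrightarrow>
      (\<integral>x. shift m xi x * Dstar a n \<phi> x \<partial>nu0) = (\<integral>x. shift n xi x * Dstar a m \<phi> x \<partial>nu0))"

end

theory Submission
  imports Defs "HOL-Computational_Algebra.Polynomial"
begin

text \<open>
  The Hermite functions H_I form an orthogonal system in L^2(nu_0) graded by degree, the
  shift tau^m only translates multi-indices, and D_n^* acts on them as a raising operator:
  D_n^* H_I = sum_k a_k (I(k+n) + 1) H_(I + e_(k+n)), of degree |I| + 1. Since cylinder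
  polynomials are exactly the finite combinations of the H_I, the pairing of tau^m Proj_N xi with
  D_n^* phi only sees the part of phi of degree N - 1, and the pairing of tau^m xi with D_n^* phi
  is the finite sum over N of its pairings with tau^m Proj_N xi. The first identity passes
  closedness from xi to its projections, the second passes it back. The projections exist by
  Bessel's inequality and the completeness of L^2.
\<close>

section \<open>Square-integrable functions and orthogonal families\<close>

definition square_integrable :: "'a measure \<Rightarrow> ('a \<Rightarrow> real) \<Rightarrow> bool" where
  "square_integrable M f \<longleftrightarrow> f \<in> borel_measurable M \<and> integrable M (\<lambda>x. (f x)\<^sup>2)"

definition lincomb :: "('i \<Rightarrow> 'a \<Rightarrow> real) \<Rightarrow> 'i set \<Rightarrow> ('i \<Rightarrow> real) \<Rightarrow> 'a \<Rightarrow> real" where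
  "lincomb e A c x = (\<Sum>i\<in>A. c i * e i x)"

lemma abs_mult_le_Young:
  fixes t u v :: real
  assumes "t > 0"
  shows "\<bar>u * v\<bar> \<le> (t * u\<^sup>2 + v\<^sup>2 / t) / 2"
proof -
  have "0 \<le> (t * \<bar>u\<bar> - \<bar>v\<bar>)\<^sup>2" by simp
  then have "2 * t * (\<bar>u\<bar> * \<bar>v\<bar>) \<le> t * (t * u\<^sup>2 + v\<^sup>2 / t)"
    using assms by (simp add: power2_eq_square algebra_simps)
  then show ?thesis
    using assms by (simp add: abs_mult mult.assoc)
qed

lemma integrable_mult_square_integrable:
  assumes "square_integrable M f" "square_integrable M g"
  shows "integrable M (\<lambda>x. f x * g x)"
proof (rule Bochner_Integration.integrable_bound)
  show "integrable M (\<lambda>x. ((f x)\<^sup>2 + (g x)\<^sup>2) / 2)"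
    using assms by (simp add: square_integrable_def)
  show "AE x in M. norm (f x * g x) \<le> norm (((f x)\<^sup>2 + (g x)\<^sup>2) / 2)"
    using abs_mult_le_Young[of 1] by simp
qed (use assms in \<open>simp add: square_integrable_def borel_measurable_times\<close>)

lemma square_integrable_zero [simp]: "square_integrable M (\<lambda>x. 0)"
  by (simp add: square_integrable_def)

lemma square_integrable_add:
  assumes "square_integrable M f" "square_integrable M g"
  shows "square_integrable M (\<lambda>x. f x + g x)"
proof -
  have "(\<lambda>x. (f x + g x)\<^sup>2) = (\<lambda>x. (f x)\<^sup>2 + 2 * (f x * g x) + (g x)\<^sup>2)"
    by (simp add: power2_eq_square algebra_simps)
  then show ?thesis
    using assms integrable_mult_square_integrable[OF assms]
    by (simp add: square_integrable_def borel_measurable_add)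
qed

lemma square_integrable_mult_const:
  assumes "square_integrable M f"
  shows "square_integrable M (\<lambda>x. r * f x)"
proof -
  have "(\<lambda>x. (r * f x)\<^sup>2) = (\<lambda>x. r\<^sup>2 * (f x)\<^sup>2)"
    by (simp add: power_mult_distrib)
  then show ?thesis
    using assms by (simp add: square_integrable_def borel_measurable_times)
qed

lemma square_integrable_diff:
  assumes "square_integrable M f" "square_integrable M g"
  shows "square_integrable M (\<lambda>x. f x - g x)"
  using square_integrable_add[OF assms(1) square_integrable_mult_const[OF assms(2), of "-1"]]
  by simp

lemma square_integrable_sum:
  "(\<And>i. i \<in> A \<Longrightarrow> square_integrable M (f i)) \<Longrightarrow> square_integrable M (\<lambda>x. \<Sum>i\<in>A. f i x)"
  by (induction A rule: infinite_finite_induct) (auto intro: square_integrable_add)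

lemma square_integrable_lincomb:
  "(\<And>i. i \<in> A \<Longrightarrow> square_integrable M (e i)) \<Longrightarrow> square_integrable M (lincomb e A c)"
  unfolding lincomb_def[abs_def]
  by (intro square_integrable_sum square_integrable_mult_const)

lemma integral_mult_lincomb:
  assumes "\<And>i. i \<in> A \<Longrightarrow> integrable M (\<lambda>x. f x * e i x)"
  shows "(\<integral>x. f x * lincomb e A c x \<partial>M) = (\<Sum>i\<in>A. c i * (\<integral>x. f x * e i x \<partial>M))"
proof -
  have "(\<lambda>x. f x * lincomb e A c x) = (\<lambda>x. \<Sum>i\<in>A. c i * (f x * e i x))"
    by (simp add: lincomb_def sum_distrib_left algebra_simps)
  then show ?thesis
    using assms by (simp add: Bochner_Integration.integral_sum)
qed

lemma integral_square_diff:
  assumes "square_integrable M u" "square_integrable M v"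
  shows "(\<integral>x. (u x - v x)\<^sup>2 \<partial>M) =
    (\<integral>x. (u x)\<^sup>2 \<partial>M) - 2 * (\<integral>x. u x * v x \<partial>M) + (\<integral>x. (v x)\<^sup>2 \<partial>M)"
proof -
  have "(\<lambda>x. (u x - v x)\<^sup>2) = (\<lambda>x. ((u x)\<^sup>2 - 2 * (u x * v x)) + (v x)\<^sup>2)"
    by (simp add: power2_eq_square algebra_simps)
  then show ?thesis
    using assms integrable_mult_square_integrable[OF assms] by (simp add: square_integrable_def)
qed

lemma abs_integral_mult_le_Young:
  assumes "square_integrable M u" "square_integrable M v" "t > 0"
  shows "\<bar>\<integral>x. u x * v x \<partial>M\<bar> \<le> (t * (\<integral>x. (u x)\<^sup>2 \<partial>M) + (\<integral>x. (v x)\<^sup>2 \<partial>M) / t) / 2"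
proof -
  have "\<bar>\<integral>x. u x * v x \<partial>M\<bar> \<le> (\<integral>x. \<bar>u x * v x\<bar> \<partial>M)"
    by (rule integral_abs_bound)
  also have "\<dots> \<le> (\<integral>x. (t * (u x)\<^sup>2 + (v x)\<^sup>2 / t) / 2 \<partial>M)"
    using assms integrable_mult_square_integrable[OF assms(1,2)] abs_mult_le_Young[OF assms(3)]
    by (intro integral_mono) (auto simp: square_integrable_def)
  also have "\<dots> = (t * (\<integral>x. (u x)\<^sup>2 \<partial>M) + (\<integral>x. (v x)\<^sup>2 \<partial>M) / t) / 2"
    using assms by (simp add: square_integrable_def)
  finally show ?thesis .
qed

lemma integral_mult_eq_of_approx:
  assumes f: "square_integrable M f" and h: "square_integrable M h"
    and approx: "\<And>\<epsilon>. \<epsilon> > 0 \<Longrightarrow> \<exists>g. square_integrable M g \<and>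
        (\<integral>x. (f x - g x)\<^sup>2 \<partial>M) < \<epsilon> \<and> (\<integral>x. g x * h x \<partial>M) = c"
  shows "(\<integral>x. f x * h x \<partial>M) = c"
proof (rule ccontr)
  define d where "d = \<bar>(\<integral>x. f x * h x \<partial>M) - c\<bar>"
  define H where "H = (\<integral>x. (h x)\<^sup>2 \<partial>M)"
  assume "(\<integral>x. f x * h x \<partial>M) \<noteq> c"
  then have d: "d > 0" by (simp add: d_def)
  have H: "H \<ge> 0" by (simp add: H_def)
  define \<delta> where "\<delta> = d / (1 + H)"
  have \<delta>: "\<delta> > 0" using d H by (simp add: \<delta>_def)
  have "\<delta> * (1 + H) = d" using H by (simp add: \<delta>_def)
  then have \<delta>H: "\<delta> + \<delta> * H = d" by (simp add: algebra_simps)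
  obtain g where g: "square_integrable M g" "(\<integral>x. (f x - g x)\<^sup>2 \<partial>M) < \<delta>\<^sup>2"
    and gh: "(\<integral>x. g x * h x \<partial>M) = c"
    using approx[of "\<delta>\<^sup>2"] \<delta> by auto
  have fg: "square_integrable M (\<lambda>x. f x - g x)"
    using f g(1) by (rule square_integrable_diff)
  have "(\<integral>x. f x * h x \<partial>M) - c = (\<integral>x. (f x - g x) * h x \<partial>M)"
    using gh integrable_mult_square_integrable[OF f h] integrable_mult_square_integrable[OF g(1) h]
    by (simp add: left_diff_distrib)
  then have "d \<le> ((1 / \<delta>) * (\<integral>x. (f x - g x)\<^sup>2 \<partial>M) + H / (1 / \<delta>)) / 2"
    unfolding d_def H_def using abs_integral_mult_le_Young[OF fg h, of "1 / \<delta>"] \<delta> by simp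
  also have "\<dots> < (\<delta> + \<delta> * H) / 2"
    using g(2) \<delta> H by (simp add: power2_eq_square field_simps)
  also have "\<dots> = d / 2"
    by (simp only: \<delta>H)
  finally show False
    using d by simp
qed

lemma square_integrable_AE_limit:
  assumes h: "\<And>i. square_integrable M (h i)" and l: "l \<in> borel_measurable M"
    and lim: "AE x in M. (\<lambda>i. h i x) \<longlonglongrightarrow> l x"
    and bound: "\<And>i. i \<ge> K \<Longrightarrow> (\<integral>x. (h i x)\<^sup>2 \<partial>M) \<le> B"
  shows "square_integrable M l" and "(\<integral>x. (l x)\<^sup>2 \<partial>M) \<le> B"
proof -
  have hm: "\<And>i. h i \<in> borel_measurable M"
    using h by (simp add: square_integrable_def)
  have "(\<integral>\<^sup>+x. ennreal ((l x)\<^sup>2) \<partial>M) = (\<integral>\<^sup>+x. liminf (\<lambda>i. ennreal ((h i x)\<^sup>2)) \<partial>M)"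
  proof (rule nn_integral_cong_AE)
    show "AE x in M. ennreal ((l x)\<^sup>2) = liminf (\<lambda>i. ennreal ((h i x)\<^sup>2))"
      using lim by eventually_elim (rule lim_imp_Liminf[symmetric], simp, intro tendsto_intros)
  qed
  also have "\<dots> \<le> liminf (\<lambda>i. \<integral>\<^sup>+x. ennreal ((h i x)\<^sup>2) \<partial>M)"
    using hm by (intro nn_integral_liminf) measurable
  also have "\<dots> \<le> ennreal B"
  proof (rule Liminf_le)
    show "\<forall>\<^sub>F i in sequentially. (\<integral>\<^sup>+x. ennreal ((h i x)\<^sup>2) \<partial>M) \<le> ennreal B"
      unfolding eventually_sequentially using h bound
      by (auto simp: square_integrable_def nn_integral_eq_integral intro!: ennreal_leI)
  qed simp
  finally have nn: "(\<integral>\<^sup>+x. ennreal ((l x)\<^sup>2) \<partial>M) \<le> ennreal B" .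
  have int: "integrable M (\<lambda>x. (l x)\<^sup>2)"
    using nn l by (intro integrableI_nonneg) (auto simp: top.not_eq_extremum le_less_trans)
  then show "square_integrable M l"
    using l by (simp add: square_integrable_def)
  have "ennreal (\<integral>x. (l x)\<^sup>2 \<partial>M) \<le> ennreal B"
    using int nn by (simp add: nn_integral_eq_integral)
  moreover have "0 \<le> (\<integral>x. (h K x)\<^sup>2 \<partial>M)"
    by simp
  then have "B \<ge> 0"
    using bound[of K] by linarith
  ultimately show "(\<integral>x. (l x)\<^sup>2 \<partial>M) \<le> B"
    by simp
qed

lemma (in finite_measure) integrable_if_square_integrable:
  assumes "square_integrable M f"
  shows "integrable M f"
  by (rule square_integrable_imp_integrable) (use assms in \<open>simp_all add: square_integrable_def\<close>)

lemma (in finite_measure) integral_abs_le_Young: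
  assumes u: "square_integrable M u" and t: "t > 0"
  shows "(\<integral>x. \<bar>u x\<bar> \<partial>M) \<le> (t * (\<integral>x. (u x)\<^sup>2 \<partial>M) + measure M (space M) / t) / 2"
proof -
  have u2: "integrable M (\<lambda>x. (u x)\<^sup>2)"
    using u by (simp add: square_integrable_def)
  have "(\<integral>x. \<bar>u x\<bar> \<partial>M) \<le> (\<integral>x. (t * (u x)\<^sup>2 + 1 / t) / 2 \<partial>M)"
  proof (rule integral_mono)
    show "integrable M (\<lambda>x. \<bar>u x\<bar>)"
      using u by (intro integrable_abs integrable_if_square_integrable)
    show "integrable M (\<lambda>x. (t * (u x)\<^sup>2 + 1 / t) / 2)"
      by (intro integrable_divide Bochner_Integration.integrable_add integrable_mult_right integrable_const u2)
    show "\<bar>u x\<bar> \<le> (t * (u x)\<^sup>2 + 1 / t) / 2" for x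
      using abs_mult_le_Young[OF t, of "u x" 1] by simp
  qed
  also have "\<dots> = (t * (\<integral>x. (u x)\<^sup>2 \<partial>M) + measure M (space M) / t) / 2"
    using u2 by (simp add: Bochner_Integration.integral_add)
  finally show ?thesis .
qed

lemma (in finite_measure) square_integrable_Cauchy_imp_L1_Cauchy:
  fixes f :: "nat \<Rightarrow> 'a \<Rightarrow> real"
  assumes f: "\<And>k. square_integrable M (f k)"
    and Cauchy: "\<And>\<epsilon>. \<epsilon> > 0 \<Longrightarrow> \<exists>K. \<forall>i\<ge>K. \<forall>j\<ge>K. (\<integral>x. (f i x - f j x)\<^sup>2 \<partial>M) < \<epsilon>"
    and "\<epsilon> > 0"
  shows "\<exists>K. \<forall>i\<ge>K. \<forall>j\<ge>K. (\<integral>x. norm (f i x - f j x) \<partial>M) < \<epsilon>"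
proof -
  define \<mu> where "\<mu> = measure M (space M)"
  define t where "t = 2 * (\<mu> + 1) / \<epsilon>"
  have \<mu>: "\<mu> \<ge> 0"
    by (simp add: \<mu>_def)
  then have t: "t > 0"
    using \<open>\<epsilon> > 0\<close> by (simp add: t_def)
  have "\<mu> / t = \<epsilon> * (\<mu> / (2 * (\<mu> + 1)))"
    using \<mu> \<open>\<epsilon> > 0\<close> by (simp add: t_def)
  also have "\<dots> < \<epsilon> * 1"
    using \<mu> \<open>\<epsilon> > 0\<close> by (intro mult_strict_left_mono) (simp_all add: field_simps)
  finally have \<mu>t: "\<mu> / t < \<epsilon>" by simp
  have "\<epsilon> / t > 0"
    using t \<open>\<epsilon> > 0\<close> by simp
  then obtain K where K: "\<And>i j. i \<ge> K \<Longrightarrow> j \<ge> K \<Longrightarrow> (\<integral>x. (f i x - f j x)\<^sup>2 \<partial>M) < \<epsilon> / t"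
    using Cauchy by blast
  have "(\<integral>x. norm (f i x - f j x) \<partial>M) < \<epsilon>" if "i \<ge> K" "j \<ge> K" for i j
  proof -
    have "(\<integral>x. norm (f i x - f j x) \<partial>M) \<le> (t * (\<integral>x. (f i x - f j x)\<^sup>2 \<partial>M) + \<mu> / t) / 2"
      unfolding real_norm_def \<mu>_def by (rule integral_abs_le_Young[OF square_integrable_diff[OF f f] t])
    also have "\<dots> < \<epsilon>"
    proof -
      have "t * (\<integral>x. (f i x - f j x)\<^sup>2 \<partial>M) < \<epsilon>"
        using K[OF that] t by (simp add: less_divide_eq mult.commute)
      then have "t * (\<integral>x. (f i x - f j x)\<^sup>2 \<partial>M) + \<mu> / t < \<epsilon> + \<epsilon>"
        using \<mu>t by linarith
      then show ?thesis by simp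
    qed
    finally show ?thesis .
  qed
  then show ?thesis
    by (intro exI[of _ K]) simp
qed

lemma (in finite_measure) square_integrable_Cauchy_AE_convergent_subseq:
  fixes f :: "nat \<Rightarrow> 'a \<Rightarrow> real"
  assumes f: "\<And>k. square_integrable M (f k)"
    and Cauchy: "\<And>\<epsilon>. \<epsilon> > 0 \<Longrightarrow> \<exists>K. \<forall>i\<ge>K. \<forall>j\<ge>K. (\<integral>x. (f i x - f j x)\<^sup>2 \<partial>M) < \<epsilon>"
  obtains r g where "strict_mono r" "g \<in> borel_measurable M" "AE x in M. (\<lambda>i. f (r i) x) \<longlonglongrightarrow> g x"
proof -
  have fi: "\<And>k. integrable M (f k)"
    using f by (rule integrable_if_square_integrable)
  obtain r where r: "strict_mono r" "AE x in M. Cauchy (\<lambda>i. f (r i) x)"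
    using cauchy_L1_AE_cauchy_subseq[where s = f, OF fi square_integrable_Cauchy_imp_L1_Cauchy[OF f Cauchy]]
    by blast
  define g where "g x = lim (\<lambda>i. f (r i) x)" for x
  have "AE x in M. (\<lambda>i. f (r i) x) \<longlonglongrightarrow> g x"
    using r(2) by eventually_elim (simp add: g_def Cauchy_convergent_iff convergent_LIMSEQ_iff)
  moreover have "g \<in> borel_measurable M"
    unfolding g_def[abs_def] using f by (intro borel_measurable_lim_metric) (simp add: square_integrable_def)
  ultimately show thesis
    using r(1) that by blast
qed

text \<open>
  Riesz--Fischer: the a.e. limit of a subsequence is the \<open>L\<^sup>2\<close> limit, by Fatou's lemma.
\<close>

lemma (in finite_measure) square_integrable_Cauchy_converges:
  fixes f :: "nat \<Rightarrow> 'a \<Rightarrow> real"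
  assumes f: "\<And>k. square_integrable M (f k)"
    and Cauchy: "\<And>\<epsilon>. \<epsilon> > 0 \<Longrightarrow> \<exists>K. \<forall>i\<ge>K. \<forall>j\<ge>K. (\<integral>x. (f i x - f j x)\<^sup>2 \<partial>M) < \<epsilon>"
  obtains g where "square_integrable M g"
    and "\<And>\<epsilon>. \<epsilon> > 0 \<Longrightarrow> \<exists>K. \<forall>k\<ge>K. (\<integral>x. (g x - f k x)\<^sup>2 \<partial>M) < \<epsilon>"
proof -
  obtain r g where r: "strict_mono r" and gm: "g \<in> borel_measurable M"
    and g_lim: "AE x in M. (\<lambda>i. f (r i) x) \<longlonglongrightarrow> g x"
    using square_integrable_Cauchy_AE_convergent_subseq[OF f Cauchy] by blast
  have fm: "\<And>k. f k \<in> borel_measurable M"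
    using f by (simp add: square_integrable_def)
  have close: "square_integrable M (\<lambda>x. g x - f k x) \<and> (\<integral>x. (g x - f k x)\<^sup>2 \<partial>M) \<le> \<epsilon>"
    if K: "\<And>i j. i \<ge> K \<Longrightarrow> j \<ge> K \<Longrightarrow> (\<integral>x. (f i x - f j x)\<^sup>2 \<partial>M) < \<epsilon>" and "k \<ge> K" for k K \<epsilon>
  proof -
    have lim: "AE x in M. (\<lambda>i. f (r i) x - f k x) \<longlonglongrightarrow> g x - f k x"
      using g_lim by eventually_elim (intro tendsto_intros)
    have bound: "(\<integral>x. (f (r i) x - f k x)\<^sup>2 \<partial>M) \<le> \<epsilon>" if "i \<ge> K" for i
      using K[of "r i" k] seq_suble[OF r, of i] that \<open>k \<ge> K\<close> by simp
    show ?thesis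
      using square_integrable_AE_limit[OF square_integrable_diff[OF f f] borel_measurable_diff[OF gm fm]
          lim bound] by blast
  qed
  show ?thesis
  proof
    obtain K where "\<And>i j. i \<ge> K \<Longrightarrow> j \<ge> K \<Longrightarrow> (\<integral>x. (f i x - f j x)\<^sup>2 \<partial>M) < 1"
      using Cauchy[of 1] by auto
    with close[of K 1 K] have "square_integrable M (\<lambda>x. (g x - f K x) + f K x)"
      by (intro square_integrable_add f) auto
    then show "square_integrable M g" by simp
  next
    fix \<epsilon> :: real assume "\<epsilon> > 0"
    then obtain K where K: "\<And>i j. i \<ge> K \<Longrightarrow> j \<ge> K \<Longrightarrow> (\<integral>x. (f i x - f j x)\<^sup>2 \<partial>M) < \<epsilon> / 2"
      using Cauchy[of "\<epsilon> / 2"] by auto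
    have "(\<integral>x. (g x - f k x)\<^sup>2 \<partial>M) < \<epsilon>" if "k \<ge> K" for k
      using close[OF K that] \<open>\<epsilon> > 0\<close> by linarith
    then show "\<exists>K. \<forall>k\<ge>K. (\<integral>x. (g x - f k x)\<^sup>2 \<partial>M) < \<epsilon>"
      by (intro exI[of _ K]) simp
  qed
qed

locale orthogonal_family = finite_measure M
  for M :: "'a measure" and e :: "'i \<Rightarrow> 'a \<Rightarrow> real" and T :: "'i set" +
  assumes square_integrable_family: "i \<in> T \<Longrightarrow> square_integrable M (e i)"
    and family_orthogonal: "i \<in> T \<Longrightarrow> j \<in> T \<Longrightarrow> i \<noteq> j \<Longrightarrow> (\<integral>x. e i x * e j x \<partial>M) = 0"
    and family_norm_pos: "i \<in> T \<Longrightarrow> (\<integral>x. (e i x)\<^sup>2 \<partial>M) > 0"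
begin

definition fourier_coeff :: "('a \<Rightarrow> real) \<Rightarrow> 'i \<Rightarrow> real" where
  "fourier_coeff f i = (\<integral>x. f x * e i x \<partial>M) / (\<integral>x. (e i x)\<^sup>2 \<partial>M)"

lemma integral_lincomb_mult_family:
  assumes "finite A" "A \<subseteq> T" "j \<in> T"
  shows "(\<integral>x. lincomb e A c x * e j x \<partial>M) = (if j \<in> A then c j * (\<integral>x. (e j x)\<^sup>2 \<partial>M) else 0)"
proof -
  have "(\<integral>x. lincomb e A c x * e j x \<partial>M) = (\<integral>x. e j x * lincomb e A c x \<partial>M)"
    by (simp add: mult.commute)
  also have "\<dots> = (\<Sum>i\<in>A. c i * (\<integral>x. e j x * e i x \<partial>M))"
    using assms by (intro integral_mult_lincomb integrable_mult_square_integrable square_integrable_family) auto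
  also have "\<dots> = (\<Sum>i\<in>A. if i = j then c j * (\<integral>x. (e j x)\<^sup>2 \<partial>M) else 0)"
    using assms by (intro sum.cong) (auto simp: family_orthogonal power2_eq_square)
  finally show ?thesis
    using assms(1) by simp
qed

lemma integral_fourier_sum_mult_family:
  assumes "finite A" "A \<subseteq> T" "j \<in> A"
  shows "(\<integral>x. lincomb e A (fourier_coeff f) x * e j x \<partial>M) = (\<integral>x. f x * e j x \<partial>M)"
proof -
  have "j \<in> T"
    using assms by auto
  then show ?thesis
    using integral_lincomb_mult_family[OF assms(1,2) \<open>j \<in> T\<close>] family_norm_pos[of j] assms(3)
    by (simp add: fourier_coeff_def)
qed

lemma integral_fourier_sum_mult_fourier_sum:
  assumes f: "square_integrable M f" and A: "finite A" "A \<subseteq> T" and "B \<subseteq> A"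
  shows "(\<integral>x. lincomb e A (fourier_coeff f) x * lincomb e B (fourier_coeff f) x \<partial>M) =
    (\<integral>x. f x * lincomb e B (fourier_coeff f) x \<partial>M)"
proof -
  have sA: "square_integrable M (lincomb e A (fourier_coeff f))"
    using A by (intro square_integrable_lincomb square_integrable_family) auto
  show ?thesis
    using assms integral_fourier_sum_mult_family[OF A]
    by (subst (1 2) integral_mult_lincomb)
       (auto intro!: sum.cong integrable_mult_square_integrable sA square_integrable_family)
qed

lemma
  assumes f: "square_integrable M f" and A: "finite A" "A \<subseteq> T" and "B \<subseteq> A"
  shows integral_square_diff_fourier_sums: "(\<integral>x. (lincomb e A (fourier_coeff f) x - lincomb e B (fourier_coeff f) x)\<^sup>2 \<partial>M) =
      (\<integral>x. (lincomb e A (fourier_coeff f) x)\<^sup>2 \<partial>M) - (\<integral>x. (lincomb e B (fourier_coeff f) x)\<^sup>2 \<partial>M)"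
    and Bessel_inequality: "(\<integral>x. (lincomb e A (fourier_coeff f) x)\<^sup>2 \<partial>M) \<le> (\<integral>x. (f x)\<^sup>2 \<partial>M)"
proof -
  have B: "finite B" "B \<subseteq> T"
    using A \<open>B \<subseteq> A\<close> finite_subset by auto
  have sq: "square_integrable M (lincomb e C (fourier_coeff f))" if "C \<subseteq> T" for C
    using that by (intro square_integrable_lincomb square_integrable_family) auto
  have AB: "(\<integral>x. lincomb e A (fourier_coeff f) x * lincomb e B (fourier_coeff f) x \<partial>M) =
      (\<integral>x. (lincomb e B (fourier_coeff f) x)\<^sup>2 \<partial>M)"
    using integral_fourier_sum_mult_fourier_sum[OF f A \<open>B \<subseteq> A\<close>]
      integral_fourier_sum_mult_fourier_sum[OF f B order_refl]
    by (simp add: power2_eq_square)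
  show "(\<integral>x. (lincomb e A (fourier_coeff f) x - lincomb e B (fourier_coeff f) x)\<^sup>2 \<partial>M) =
      (\<integral>x. (lincomb e A (fourier_coeff f) x)\<^sup>2 \<partial>M) - (\<integral>x. (lincomb e B (fourier_coeff f) x)\<^sup>2 \<partial>M)"
    using integral_square_diff[OF sq sq] A B AB by simp
  have "0 \<le> (\<integral>x. (f x - lincomb e A (fourier_coeff f) x)\<^sup>2 \<partial>M)"
    by simp
  also have "\<dots> = (\<integral>x. (f x)\<^sup>2 \<partial>M) - (\<integral>x. (lincomb e A (fourier_coeff f) x)\<^sup>2 \<partial>M)"
    using integral_square_diff[OF f sq] integral_fourier_sum_mult_fourier_sum[OF f A order_refl] A
    by (simp add: power2_eq_square)
  finally show "(\<integral>x. (lincomb e A (fourier_coeff f) x)\<^sup>2 \<partial>M) \<le> (\<integral>x. (f x)\<^sup>2 \<partial>M)"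
    by simp
qed

lemma fourier_sums_Cauchy:
  assumes f: "square_integrable M f" and F: "\<And>k. finite (F k)" "\<And>k. F k \<subseteq> T" "incseq F"
    and "\<epsilon> > 0"
  shows "\<exists>K. \<forall>i\<ge>K. \<forall>j\<ge>K.
    (\<integral>x. (lincomb e (F i) (fourier_coeff f) x - lincomb e (F j) (fourier_coeff f) x)\<^sup>2 \<partial>M) < \<epsilon>"
proof -
  define s where "s k = lincomb e (F k) (fourier_coeff f)" for k
  define n where "n k = (\<integral>x. (s k x)\<^sup>2 \<partial>M)" for k
  have diff_le: "(\<integral>x. (s k x - s l x)\<^sup>2 \<partial>M) = n k - n l" if "l \<le> k" for k l
    unfolding s_def n_def using F \<open>incseq F\<close> that
    by (intro integral_square_diff_fourier_sums[OF f]) (auto simp: incseq_def)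
  have diff: "(\<integral>x. (s i x - s j x)\<^sup>2 \<partial>M) = \<bar>n i - n j\<bar>" for i j
  proof (cases "j \<le> i")
    case True
    have "0 \<le> (\<integral>x. (s i x - s j x)\<^sup>2 \<partial>M)" by simp
    then show ?thesis using diff_le[OF True] by simp
  next
    case False
    have "(\<integral>x. (s i x - s j x)\<^sup>2 \<partial>M) = (\<integral>x. (s j x - s i x)\<^sup>2 \<partial>M)"
      by (simp add: power2_commute)
    moreover have "0 \<le> (\<integral>x. (s i x - s j x)\<^sup>2 \<partial>M)" by simp
    ultimately show ?thesis using diff_le[of i j] False by simp
  qed
  have "incseq n"
  proof (rule incseq_SucI)
    fix k
    have "0 \<le> (\<integral>x. (s (Suc k) x - s k x)\<^sup>2 \<partial>M)" by simp
    then show "n k \<le> n (Suc k)" using diff_le[of k "Suc k"] by simp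
  qed
  moreover have "n k \<le> (\<integral>x. (f x)\<^sup>2 \<partial>M)" for k
    unfolding n_def s_def using F by (intro Bessel_inequality[OF f]) auto
  ultimately have "Cauchy n"
    using incseq_convergent convergent_Cauchy convergent_def by metis
  then obtain K where "\<forall>i\<ge>K. \<forall>j\<ge>K. dist (n i) (n j) < \<epsilon>"
    using \<open>\<epsilon> > 0\<close> unfolding Cauchy_def by blast
  then show ?thesis
    by (intro exI[of _ K]) (simp add: diff[unfolded s_def] dist_real_def)
qed

lemma orthogonal_projection_exists:
  assumes f: "square_integrable M f" and F: "\<And>k. finite (F k)" "\<And>k. F k \<subseteq> T" "incseq F"
  obtains P where "square_integrable M P"
    and "\<And>\<epsilon>. \<epsilon> > 0 \<Longrightarrow> \<exists>k c. (\<integral>x. (P x - lincomb e (F k) c x)\<^sup>2 \<partial>M) < \<epsilon>"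
    and "\<And>i k. i \<in> F k \<Longrightarrow> (\<integral>x. (f x - P x) * e i x \<partial>M) = 0"
proof -
  define s where "s k = lincomb e (F k) (fourier_coeff f)" for k
  have s: "square_integrable M (s k)" for k
    unfolding s_def using F by (intro square_integrable_lincomb square_integrable_family) auto
  obtain P where P: "square_integrable M P"
    and lim: "\<And>\<epsilon>. \<epsilon> > 0 \<Longrightarrow> \<exists>K. \<forall>k\<ge>K. (\<integral>x. (P x - s k x)\<^sup>2 \<partial>M) < \<epsilon>"
    using square_integrable_Cauchy_converges[OF s fourier_sums_Cauchy[OF f F, folded s_def]] by blast
  show thesis
  proof
    show "\<exists>k c. (\<integral>x. (P x - lincomb e (F k) c x)\<^sup>2 \<partial>M) < \<epsilon>" if "\<epsilon> > 0" for \<epsilon>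
      using lim[OF that] unfolding s_def by blast
    show "(\<integral>x. (f x - P x) * e i x \<partial>M) = 0" if "i \<in> F k0" for i k0
    proof (rule integral_mult_eq_of_approx[OF square_integrable_diff[OF f P]])
      show "square_integrable M (e i)"
        using F that by (auto intro: square_integrable_family)
      fix \<epsilon> :: real assume "\<epsilon> > 0"
      then obtain K where K: "\<And>k. k \<ge> K \<Longrightarrow> (\<integral>x. (P x - s k x)\<^sup>2 \<partial>M) < \<epsilon>"
        using lim by blast
      define k where "k = max K k0"
      have "F k0 \<subseteq> F k"
        using \<open>incseq F\<close> by (simp add: k_def incseq_def)
      with that have "i \<in> F k" by blast
      have "i \<in> T"
        using F(2) \<open>i \<in> F k\<close> by blast
      then have "(\<integral>x. (f x - s k x) * e i x \<partial>M) = (\<integral>x. f x * e i x \<partial>M) - (\<integral>x. s k x * e i x \<partial>M)"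
        by (simp add: left_diff_distrib integrable_mult_square_integrable f s square_integrable_family)
      also have "\<dots> = 0"
        unfolding s_def using integral_fourier_sum_mult_family[OF F(1,2) \<open>i \<in> F k\<close>] by simp
      finally have "(\<integral>x. (f x - s k x) * e i x \<partial>M) = 0" .
      moreover have "(\<integral>x. ((f x - P x) - (f x - s k x))\<^sup>2 \<partial>M) < \<epsilon>"
        using K[of k] by (simp add: k_def power2_commute)
      ultimately show "\<exists>g. square_integrable M g \<and> (\<integral>x. ((f x - P x) - g x)\<^sup>2 \<partial>M) < \<epsilon> \<and>
          (\<integral>x. g x * e i x \<partial>M) = 0"
        using square_integrable_diff[OF f s] by blast
    qed
  qed (rule P)
qed

end

section \<open>One-dimensional Hermite polynomials\<close>

fun hermite_poly :: "nat \<Rightarrow> real poly" where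
  "hermite_poly 0 = 1"
| "hermite_poly (Suc i) = [:0, 1:] * hermite_poly i - pderiv (hermite_poly i)"

lemma higher_deriv_gaussian:
  "(deriv ^^ i) (\<lambda>t. exp (- t\<^sup>2 / 2)) = (\<lambda>t. (-1) ^ i * poly (hermite_poly i) t * exp (- t\<^sup>2 / 2))"
proof (induction i)
  case 0
  then show ?case by simp
next
  case (Suc i)
  have "((\<lambda>t. (-1) ^ i * poly (hermite_poly i) t * exp (- t\<^sup>2 / 2)) has_real_derivative
      (-1) ^ Suc i * poly (hermite_poly (Suc i)) t * exp (- t\<^sup>2 / 2)) (at t)" for t
    by (auto intro!: derivative_eq_intros poly_DERIV simp: algebra_simps power2_eq_square)
  then have "deriv (\<lambda>t. (-1) ^ i * poly (hermite_poly i) t * exp (- t\<^sup>2 / 2)) =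
      (\<lambda>t. (-1) ^ Suc i * poly (hermite_poly (Suc i)) t * exp (- t\<^sup>2 / 2))"
    by (intro ext DERIV_imp_deriv)
  then show ?case
    by (simp only: funpow.simps comp_apply Suc.IH)
qed

lemma hermite_eq_poly: "hermite i x = poly (hermite_poly i) x / fact i"
proof -
  have "exp (x\<^sup>2 / 2) * exp (- x\<^sup>2 / 2) = 1"
    by (simp add: exp_minus field_simps)
  moreover have "(-1::real) ^ i * (-1) ^ i = 1"
    by (simp flip: power_mult_distrib)
  ultimately show ?thesis
    unfolding hermite_def higher_deriv_gaussian
    by (metis (no_types, lifting) mult.assoc mult.commute mult.left_commute mult_1 times_divide_eq_left)
qed

lemma hermite_0 [simp]: "hermite 0 x = 1"
  by (simp add: hermite_eq_poly)

lemma degree_hermite_poly: "Polynomial.degree (hermite_poly i) = i"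
  and coeff_hermite_poly_self: "coeff (hermite_poly i) i = 1"
proof -
  have "Polynomial.degree (hermite_poly i) \<le> i \<and> coeff (hermite_poly i) i = 1"
  proof (induction i)
    case (Suc i)
    have d1: "Polynomial.degree ([:0, 1:] * hermite_poly i) \<le> Suc i"
      using degree_mult_le[of "[:0, 1::real:]" "hermite_poly i"] Suc by auto
    have d2: "Polynomial.degree (pderiv (hermite_poly i)) \<le> i"
      using degree_pderiv[of "hermite_poly i"] Suc by auto
    have "coeff (pderiv (hermite_poly i)) (Suc i) = 0"
      using d2 by (simp add: coeff_eq_0)
    moreover have "Polynomial.degree (hermite_poly (Suc i)) \<le> Suc i"
      using degree_diff_le[OF d1] d2 by simp
    ultimately show ?case
      using Suc by (simp add: mult_pCons_left)
  qed simp
  then show "Polynomial.degree (hermite_poly i) = i" "coeff (hermite_poly i) i = 1"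
    by (auto simp: le_antisym le_degree)
qed

definition std_gauss :: "real measure" where
  "std_gauss = density lborel std_normal_density"

lemma prob_space_std_gauss: "prob_space std_gauss"
  unfolding std_gauss_def by (rule prob_space_normal_density) simp

lemma sets_std_gauss [measurable_cong, simp]: "sets std_gauss = sets borel"
  by (simp add: std_gauss_def)

lemma space_std_gauss [simp]: "space std_gauss = UNIV"
  by (simp add: std_gauss_def)

definition gaussian_moment :: "nat \<Rightarrow> real" where
  "gaussian_moment k = (if even k then fact k / (2 ^ (k div 2) * fact (k div 2)) else 0)"

lemma has_bochner_integral_power_std_gauss:
  "has_bochner_integral std_gauss (\<lambda>x. x ^ k) (gaussian_moment k)"
proof (cases "even k")
  case True
  then obtain j where k: "k = 2 * j" by auto
  show ?thesis unfolding std_gauss_def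
    by (rule has_bochner_integral_density) (use std_normal_moment_even[of j] in \<open>auto simp: k gaussian_moment_def\<close>)
next
  case False
  then obtain j where k: "k = 2 * j + 1" using oddE by blast
  show ?thesis unfolding std_gauss_def
    by (rule has_bochner_integral_density) (use std_normal_moment_odd[of j] in \<open>auto simp: k gaussian_moment_def\<close>)
qed

lemma integrable_power_std_gauss [simp]: "integrable std_gauss (\<lambda>x. x ^ k)"
  and integral_power_std_gauss: "(\<integral>x. x ^ k \<partial>std_gauss) = gaussian_moment k"
  using has_bochner_integral_power_std_gauss[of k] by (auto simp: has_bochner_integral_iff)

lemma gaussian_moment_Suc_Suc: "gaussian_moment (Suc (Suc k)) = Suc k * gaussian_moment k"
proof (cases "even k")
  case True
  then obtain j where k: "k = 2 * j" by auto
  have "(fact j :: real) > 0" "(1 + real j) > 0" by auto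
  then show ?thesis
    by (simp add: gaussian_moment_def k fact_Suc divide_simps)
qed (simp add: gaussian_moment_def)

lemma gaussian_moment_Suc: "gaussian_moment (Suc i) = i * gaussian_moment (i - 1)"
  by (cases i) (simp add: gaussian_moment_def, simp only: gaussian_moment_Suc_Suc, simp)

lemma integrable_poly_std_gauss [simp]: "integrable std_gauss (poly p)"
  unfolding poly_altdef by (intro Bochner_Integration.integrable_sum integrable_mult_right integrable_power_std_gauss)

lemma integral_poly_std_gauss:
  "integral\<^sup>L std_gauss (poly p) = (\<Sum>i\<le>Polynomial.degree p. coeff p i * gaussian_moment i)"
  unfolding poly_altdef by (simp add: integral_power_std_gauss)

lemma gaussian_integration_by_parts_poly:
  "(\<integral>x. x * poly p x \<partial>std_gauss) = integral\<^sup>L std_gauss (poly (pderiv p))"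
proof -
  have "(\<integral>x. x * poly p x \<partial>std_gauss) = (\<integral>x. (\<Sum>i\<le>Polynomial.degree p. coeff p i * x ^ Suc i) \<partial>std_gauss)"
    unfolding poly_altdef by (simp add: sum_distrib_left algebra_simps power_Suc)
  also have "\<dots> = (\<Sum>i\<le>Polynomial.degree p. coeff p i * gaussian_moment (Suc i))"
    by (subst Bochner_Integration.integral_sum)
       (auto simp: integral_power_std_gauss mult.assoc simp del: power_Suc)
  also have "\<dots> = (\<Sum>i\<le>Polynomial.degree p. coeff p i * (of_nat i * gaussian_moment (i - 1)))"
    by (simp add: gaussian_moment_Suc)
  also have "\<dots> = (\<integral>x. (\<Sum>i\<le>Polynomial.degree p. coeff p i * (of_nat i * x ^ (i - 1))) \<partial>std_gauss)"
    by (subst Bochner_Integration.integral_sum) (auto simp: integral_power_std_gauss mult.assoc)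
  also have "\<dots> = integral\<^sup>L std_gauss (poly (pderiv p))"
  proof -
    have "((\<lambda>x. \<Sum>i\<le>Polynomial.degree p. coeff p i * x ^ i) has_real_derivative
        (\<Sum>i\<le>Polynomial.degree p. coeff p i * (of_nat i * x ^ (i - 1)))) (at x)" for x
      by (auto intro!: derivative_eq_intros sum.cong simp: algebra_simps)
    then have "poly (pderiv p) x = (\<Sum>i\<le>Polynomial.degree p. coeff p i * (of_nat i * x ^ (i - 1)))" for x
      using poly_DERIV[of p x] DERIV_unique unfolding poly_altdef[symmetric] by blast
    then have "poly (pderiv p) = (\<lambda>x. \<Sum>i\<le>Polynomial.degree p. coeff p i * (of_nat i * x ^ (i - 1)))"
      by (intro ext)
    then show ?thesis
      by (simp only:)
  qed
  finally show ?thesis .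
qed

lemma integral_hermite_poly_mult_std_gauss:
  "Polynomial.degree q \<le> i \<Longrightarrow> integral\<^sup>L std_gauss (poly (hermite_poly i * q)) = fact i * coeff q i"
proof (induction i arbitrary: q)
  case 0
  then show ?case by (simp add: integral_poly_std_gauss gaussian_moment_def)
next
  case (Suc i)
  have "poly (hermite_poly (Suc i) * q) = (\<lambda>x. x * poly (hermite_poly i * q) x - poly (pderiv (hermite_poly i) * q) x)"
    by (rule ext) (simp add: algebra_simps)
  moreover have "integrable std_gauss (\<lambda>x. x * poly (hermite_poly i * q) x)"
  proof -
    have "poly ([:0, 1:] * (hermite_poly i * q)) = (\<lambda>x. x * poly (hermite_poly i * q) x)"
      by (rule ext) simp
    then show ?thesis
      by (metis integrable_poly_std_gauss)
  qed
  ultimately have "integral\<^sup>L std_gauss (poly (hermite_poly (Suc i) * q)) =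
      (\<integral>x. x * poly (hermite_poly i * q) x \<partial>std_gauss) - integral\<^sup>L std_gauss (poly (pderiv (hermite_poly i) * q))"
    by (simp del: poly_mult)
  also have "\<dots> = integral\<^sup>L std_gauss (poly (pderiv (hermite_poly i * q))) -
      integral\<^sup>L std_gauss (poly (pderiv (hermite_poly i) * q))"
    by (simp only: gaussian_integration_by_parts_poly)
  also have "\<dots> = integral\<^sup>L std_gauss (poly (hermite_poly i * pderiv q))"
  proof -
    have "poly (pderiv (hermite_poly i * q)) =
        (\<lambda>x. poly (hermite_poly i * pderiv q) x + poly (pderiv (hermite_poly i) * q) x)"
      by (rule ext) (simp add: pderiv_mult)
    then show ?thesis
      by (simp del: poly_mult)
  qed
  also have "\<dots> = fact i * coeff (pderiv q) i"
    using Suc.prems degree_pderiv[of q] by (intro Suc.IH) simp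
  also have "\<dots> = fact (Suc i) * coeff q (Suc i)"
    by (simp add: coeff_pderiv algebra_simps)
  finally show ?case .
qed

lemma hermite_orthogonal:
  "(\<integral>x. hermite i x * hermite j x \<partial>std_gauss) = (if i = j then 1 / fact i else 0)"
proof -
  have sym: "(\<integral>x. hermite i x * hermite j x \<partial>std_gauss) = (if i = j then 1 / fact i else 0)"
    if "j \<le> i" for i j
  proof -
    have "(\<lambda>x. hermite i x * hermite j x) =
        (\<lambda>x. poly (hermite_poly i * hermite_poly j) x / (fact i * fact j))"
      by (simp add: hermite_eq_poly)
    then have "(\<integral>x. hermite i x * hermite j x \<partial>std_gauss) =
        integral\<^sup>L std_gauss (poly (hermite_poly i * hermite_poly j)) / (fact i * fact j)"
      by (simp del: poly_mult)
    also have "\<dots> = coeff (hermite_poly j) i / fact j"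
      using that by (simp add: integral_hermite_poly_mult_std_gauss degree_hermite_poly)
    also have "\<dots> = (if i = j then 1 / fact i else 0)"
      using that by (auto simp: coeff_hermite_poly_self coeff_eq_0 degree_hermite_poly)
    finally show ?thesis .
  qed
  show ?thesis
    using sym[of j i] sym[of i j] by (cases "j \<le> i") (auto simp: mult.commute)
qed

lemma poly_eq_hermite_sum:
  "Polynomial.degree p \<le> n \<Longrightarrow> \<exists>b. \<forall>x. poly p x = (\<Sum>j\<le>n. b j * hermite j x)"
proof (induction n arbitrary: p)
  case 0
  then have "p = [:coeff p 0:]"
    using degree_0_id[of p] by simp
  then obtain c where "p = [:c:]" by blast
  then show ?case
    by (intro exI[of _ "\<lambda>_. c"]) simp
next
  case (Suc n)
  define r where "r = p - smult (coeff p (Suc n)) (hermite_poly (Suc n))"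
  have "Polynomial.degree r \<le> Suc n"
    unfolding r_def using Suc.prems degree_hermite_poly[of "Suc n"]
    by (intro degree_diff_le) (auto intro: order.trans[OF degree_smult_le] simp del: hermite_poly.simps)
  moreover have "coeff r (Suc n) = 0"
    by (simp add: r_def coeff_hermite_poly_self del: hermite_poly.simps)
  ultimately have "Polynomial.degree r \<le> n"
    by (metis le_SucE leading_coeff_0_iff degree_0 zero_le)
  then obtain b where b: "\<And>x. poly r x = (\<Sum>j\<le>n. b j * hermite j x)"
    using Suc.IH by blast
  have "poly p x = (\<Sum>j\<le>Suc n. (b(Suc n := coeff p (Suc n) * fact (Suc n))) j * hermite j x)" for x
    using b[of x] by (simp add: r_def hermite_eq_poly)
  then show ?case by blast
qed

lemma hermite_has_real_derivative:
  "(hermite i has_real_derivative poly (pderiv (hermite_poly i)) t / fact i) (at t)"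
  unfolding hermite_eq_poly[abs_def] by (auto intro!: derivative_eq_intros poly_DERIV)

lemma hermite_raising:
  "t * hermite i t - poly (pderiv (hermite_poly i)) t / fact i = (of_nat i + 1) * hermite (Suc i) t"
proof -
  have "(of_nat i + 1) * hermite (Suc i) t =
      (of_nat i + 1) * (t * poly (hermite_poly i) t - poly (pderiv (hermite_poly i)) t) / ((of_nat i + 1) * fact i)"
    by (simp add: hermite_eq_poly fact_Suc algebra_simps)
  also have "\<dots> = (t * poly (hermite_poly i) t - poly (pderiv (hermite_poly i)) t) / fact i"
    by simp
  finally show ?thesis
    by (simp add: hermite_eq_poly diff_divide_distrib)
qed

section \<open>Multi-indices and Hermite functions of infinitely many variables\<close>

lemma supp_fun_upd_subset: "supp (I(n := v)) \<subseteq> insert n (supp I)"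
  by (auto simp: supp_def)

lemma multi_index_fun_upd [simp]: "multi_index I \<Longrightarrow> multi_index (I(n := v))"
  unfolding multi_index_def using supp_fun_upd_subset by (meson finite_insert finite_subset)

lemma multi_index_zero [simp]: "multi_index (\<lambda>_. 0)"
  by (simp add: multi_index_def supp_def)

lemma hermite_multi_eq_prod_superset:
  "finite S \<Longrightarrow> supp I \<subseteq> S \<Longrightarrow> hermite_multi I x = (\<Prod>n\<in>S. hermite (I n) (x n))"
  unfolding hermite_multi_def by (rule prod.mono_neutral_left) (auto simp: supp_def)

lemma monomial_eq_prod_superset:
  "finite S \<Longrightarrow> supp I \<subseteq> S \<Longrightarrow> monomial I x = (\<Prod>n\<in>S. x n ^ I n)"
  unfolding monomial_def by (rule prod.mono_neutral_left) (auto simp: supp_def)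

lemma degree_eq_sum_superset:
  "finite S \<Longrightarrow> supp I \<subseteq> S \<Longrightarrow> Defs.degree I = (\<Sum>n\<in>S. I n)"
  unfolding degree_def by (rule sum.mono_neutral_left) (auto simp: supp_def)

lemma hermite_multi_zero: "hermite_multi (\<lambda>_. 0) = (\<lambda>x. 1)"
  by (rule ext) (simp add: hermite_multi_def supp_def)

lemma hermite_multi_fun_upd:
  assumes "multi_index I"
  shows "hermite_multi (I(n := j)) x = hermite_multi (I(n := 0)) x * hermite j (x n)"
proof -
  define S where "S = insert n (supp I)"
  have S: "finite S" "n \<in> S"
    using assms by (simp_all add: S_def multi_index_def)
  have "hermite_multi (I(n := v)) x = hermite v (x n) * (\<Prod>k\<in>S - {n}. hermite (I k) (x k))" for v
  proof -
    have "hermite_multi (I(n := v)) x = (\<Prod>k\<in>S. hermite ((I(n := v)) k) (x k))"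
      by (rule hermite_multi_eq_prod_superset[OF S(1)]) (use supp_fun_upd_subset in \<open>auto simp: S_def\<close>)
    also have "\<dots> = hermite v (x n) * (\<Prod>k\<in>S - {n}. hermite (I k) (x k))"
      using S by (simp add: prod.remove)
    finally show ?thesis .
  qed
  from this[of j] this[of 0] show ?thesis
    by simp
qed

lemma hermite_multi_split:
  "multi_index I \<Longrightarrow> hermite_multi I x = hermite_multi (I(n := 0)) x * hermite (I n) (x n)"
  using hermite_multi_fun_upd[of I n "I n" x] by simp

lemma hermite_multi_fun_upd_zero_indep:
  "hermite_multi (I(n := 0)) (x(n := t)) = hermite_multi (I(n := 0)) x"
  unfolding hermite_multi_def by (rule prod.cong) (auto simp: supp_def)

lemma degree_fun_upd:
  assumes "multi_index I"
  shows "Defs.degree (I(n := v)) + I n = Defs.degree I + v"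
proof -
  define S where "S = insert n (supp I)"
  have S: "finite S" "n \<in> S"
    using assms by (simp_all add: S_def multi_index_def)
  have "Defs.degree (I(n := v)) = (\<Sum>k\<in>S. (I(n := v)) k)"
    by (rule degree_eq_sum_superset[OF S(1)]) (use supp_fun_upd_subset in \<open>auto simp: S_def\<close>)
  also have "\<dots> = v + (\<Sum>k\<in>S - {n}. I k)"
    using S by (simp add: sum.remove)
  moreover have "Defs.degree I = (\<Sum>k\<in>S. I k)"
    by (rule degree_eq_sum_superset[OF S(1)]) (auto simp: S_def)
  moreover have "\<dots> = I n + (\<Sum>k\<in>S - {n}. I k)"
    using S by (simp add: sum.remove)
  ultimately show ?thesis
    by simp
qed

definition raise_index :: "(int \<Rightarrow> nat) \<Rightarrow> int \<Rightarrow> int \<Rightarrow> nat" where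
  "raise_index I j = I(j := Suc (I j))"

lemma multi_index_raise_index [simp]: "multi_index I \<Longrightarrow> multi_index (raise_index I j)"
  by (simp add: raise_index_def)

lemma degree_raise_index: "multi_index I \<Longrightarrow> Defs.degree (raise_index I j) = Suc (Defs.degree I)"
  using degree_fun_upd[of I j "Suc (I j)"] by (simp add: raise_index_def)

definition multi_span :: "((int \<Rightarrow> nat) \<Rightarrow> (int \<Rightarrow> real) \<Rightarrow> real) \<Rightarrow> ((int \<Rightarrow> real) \<Rightarrow> real) \<Rightarrow> bool" where
  "multi_span B f \<longleftrightarrow> (\<exists>A c. finite A \<and> (\<forall>I\<in>A. multi_index I) \<and> f = lincomb B A c)"

lemma cyl_poly_eq_multi_span_monomial: "cyl_poly = multi_span monomial"
  by (intro ext) (simp add: cyl_poly_def multi_span_def lincomb_def[abs_def])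

lemma multi_span_basis: "multi_index I \<Longrightarrow> multi_span B (B I)"
  unfolding multi_span_def lincomb_def
  by (intro exI[of _ "{I}"] exI[of _ "\<lambda>_. 1"]) auto

lemma multi_span_add:
  assumes "multi_span B f" "multi_span B g"
  shows "multi_span B (\<lambda>x. f x + g x)"
proof -
  obtain A c where A: "finite A" "\<forall>I\<in>A. multi_index I" "f = lincomb B A c"
    using assms(1) unfolding multi_span_def by blast
  obtain A' c' where A': "finite A'" "\<forall>I\<in>A'. multi_index I" "g = lincomb B A' c'"
    using assms(2) unfolding multi_span_def by blast
  define d where "d I = (if I \<in> A then c I else 0) + (if I \<in> A' then c' I else 0)" for I
  have "lincomb B (A \<union> A') d x = lincomb B A c x + lincomb B A' c' x" for x
  proof -
    have "lincomb B (A \<union> A') d x =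
        (\<Sum>I\<in>A \<union> A'. if I \<in> A then c I * B I x else 0) + (\<Sum>I\<in>A \<union> A'. if I \<in> A' then c' I * B I x else 0)"
      unfolding lincomb_def sum.distrib[symmetric] by (rule sum.cong) (auto simp: d_def algebra_simps)
    also have "(\<Sum>I\<in>A \<union> A'. if I \<in> A then c I * B I x else 0) = lincomb B A c x"
      unfolding lincomb_def by (rule sum.mono_neutral_cong_right) (use A A' in auto)
    also have "(\<Sum>I\<in>A \<union> A'. if I \<in> A' then c' I * B I x else 0) = lincomb B A' c' x"
      unfolding lincomb_def by (rule sum.mono_neutral_cong_right) (use A A' in auto)
    finally show ?thesis .
  qed
  then show ?thesis
    unfolding multi_span_def using A A' by (intro exI[of _ "A \<union> A'"] exI[of _ d]) auto
qed

lemma multi_span_lincomb: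
  assumes "finite T" "\<And>t. t \<in> T \<Longrightarrow> multi_span B (f t)"
  shows "multi_span B (\<lambda>x. \<Sum>t\<in>T. r t * f t x)"
  using assms
proof (induction T rule: finite_induct)
  case empty
  then show ?case
    unfolding multi_span_def lincomb_def[abs_def] by (intro exI[of _ "{}"] exI[of _ "\<lambda>_. 0"]) simp
next
  case (insert t T)
  have t: "multi_span B (\<lambda>x. r t * f t x)"
  proof -
    obtain A c where "finite A" "\<forall>I\<in>A. multi_index I" "f t = lincomb B A c"
      using insert.prems unfolding multi_span_def by blast
    then show ?thesis
      unfolding multi_span_def lincomb_def
      by (intro exI[of _ A] exI[of _ "\<lambda>I. r t * c I"]) (auto simp: sum_distrib_left mult.assoc)
  qed
  have "multi_span B (\<lambda>x. \<Sum>t\<in>T. r t * f t x)"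
    using insert.IH insert.prems by blast
  from multi_span_add[OF t this] show ?case
    using insert.hyps by simp
qed

lemma multi_span_hermite_mult_coordinate_poly:
  assumes "multi_span hermite_multi f"
  shows "multi_span hermite_multi (\<lambda>x. f x * poly p (x n))"
proof -
  have basis: "multi_span hermite_multi (\<lambda>x. hermite_multi I x * poly p (x n))" if I: "multi_index I" for I
  proof -
    define q where "q = smult (1 / fact (I n)) (hermite_poly (I n)) * p"
    obtain b where b: "\<And>t. poly q t = (\<Sum>j\<le>Polynomial.degree q. b j * hermite j t)"
      using poly_eq_hermite_sum[of q, OF order_refl] by blast
    have "hermite_multi I x * poly p (x n) =
        (\<Sum>j\<le>Polynomial.degree q. b j * hermite_multi (I(n := j)) x)" for x
    proof -
      have "hermite_multi I x * poly p (x n) = hermite_multi (I(n := 0)) x * poly q (x n)"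
        using hermite_multi_split[OF I, of x n] by (simp add: q_def hermite_eq_poly)
      also have "\<dots> = (\<Sum>j\<le>Polynomial.degree q. b j * hermite_multi (I(n := j)) x)"
        unfolding b sum_distrib_left
      proof (rule sum.cong[OF refl])
        fix j
        show "hermite_multi (I(n := 0)) x * (b j * hermite j (x n)) = b j * hermite_multi (I(n := j)) x"
          unfolding hermite_multi_fun_upd[OF I, of n j x] by simp
      qed
      finally show ?thesis .
    qed
    moreover have "multi_span hermite_multi (\<lambda>x. \<Sum>j\<le>Polynomial.degree q. b j * hermite_multi (I(n := j)) x)"
      using I by (intro multi_span_lincomb multi_span_basis) auto
    ultimately show ?thesis
      by simp
  qed
  obtain A c where A: "finite A" "\<forall>I\<in>A. multi_index I" "f = lincomb hermite_multi A c"
    using assms unfolding multi_span_def by blast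
  then have "(\<lambda>x. f x * poly p (x n)) = (\<lambda>x. \<Sum>I\<in>A. c I * (hermite_multi I x * poly p (x n)))"
    by (simp add: lincomb_def sum_distrib_right mult.assoc)
  moreover have "multi_span hermite_multi (\<lambda>x. \<Sum>I\<in>A. c I * (hermite_multi I x * poly p (x n)))"
    using A basis by (intro multi_span_lincomb) auto
  ultimately show ?thesis
    by simp
qed

lemma monomial_in_hermite_span: "multi_index I \<Longrightarrow> multi_span hermite_multi (monomial I)"
proof -
  have "multi_span hermite_multi (\<lambda>x. \<Prod>k\<in>S. x k ^ I k)" if "finite S" for S
    using that
  proof (induction S rule: finite_induct)
    case empty
    then show ?case
      using multi_span_basis[OF multi_index_zero, of hermite_multi] by (simp add: hermite_multi_zero)
  next
    case (insert k S)
    then show ?case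
      using multi_span_hermite_mult_coordinate_poly[OF insert.IH, of "monom 1 (I k)" k]
      by (simp add: poly_monom mult.commute)
  qed
  then show "multi_index I \<Longrightarrow> multi_span hermite_multi (monomial I)"
    unfolding multi_index_def monomial_def[abs_def] by blast
qed

lemma monomial_mult:
  assumes "multi_index I" "multi_index J"
  shows "monomial I x * monomial J x = monomial (\<lambda>n. I n + J n) x"
proof -
  define S where "S = supp I \<union> supp J"
  have S: "finite S"
    using assms by (simp add: S_def multi_index_def)
  have "supp (\<lambda>n. I n + J n) \<subseteq> S"
    by (auto simp: S_def supp_def)
  then show ?thesis
    using monomial_eq_prod_superset[OF S] by (auto simp: S_def power_add prod.distrib)
qed

lemma cyl_poly_mult:
  assumes "cyl_poly f" "cyl_poly g"
  shows "cyl_poly (\<lambda>x. f x * g x)"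
proof -
  obtain A c where A: "finite A" "\<forall>I\<in>A. multi_index I" "f = lincomb monomial A c"
    using assms(1) unfolding cyl_poly_eq_multi_span_monomial multi_span_def by blast
  obtain B d where B: "finite B" "\<forall>I\<in>B. multi_index I" "g = lincomb monomial B d"
    using assms(2) unfolding cyl_poly_eq_multi_span_monomial multi_span_def by blast
  have "f x * g x = (\<Sum>I\<in>A. c I * (\<Sum>J\<in>B. d J * monomial (\<lambda>n. I n + J n) x))" for x
  proof -
    have "f x * g x = (\<Sum>I\<in>A. \<Sum>J\<in>B. c I * monomial I x * (d J * monomial J x))"
      by (simp add: A B lincomb_def sum_product)
    also have "\<dots> = (\<Sum>I\<in>A. c I * (\<Sum>J\<in>B. d J * monomial (\<lambda>n. I n + J n) x))"
      using A B by (auto simp: sum_distrib_left monomial_mult[symmetric] algebra_simps intro!: sum.cong)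
    finally show ?thesis .
  qed
  moreover have "multi_span monomial (\<lambda>x. \<Sum>I\<in>A. c I * (\<Sum>J\<in>B. d J * monomial (\<lambda>n. I n + J n) x))"
    using A B by (intro multi_span_lincomb multi_span_basis) (auto simp: multi_index_def supp_def)
  ultimately show ?thesis
    unfolding cyl_poly_eq_multi_span_monomial by simp
qed

lemma cyl_poly_coordinate_poly: "cyl_poly (\<lambda>x. poly p (x n))"
proof -
  have "monomial ((\<lambda>_. 0)(n := i)) x = x n ^ i" for i x
  proof -
    have "supp ((\<lambda>_. 0)(n := i)) \<subseteq> {n}"
      by (auto simp: supp_def)
    from monomial_eq_prod_superset[OF _ this, of x] show ?thesis
      by simp
  qed
  then have "(\<lambda>x. poly p (x n)) = (\<lambda>x. \<Sum>i\<le>Polynomial.degree p. coeff p i * monomial ((\<lambda>_. 0)(n := i)) x)"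
    by (simp add: poly_altdef)
  moreover have "multi_span monomial (\<lambda>x. \<Sum>i\<le>Polynomial.degree p. coeff p i * monomial ((\<lambda>_. 0)(n := i)) x)"
    by (intro multi_span_lincomb multi_span_basis) (auto simp del: fun_upd_apply)
  ultimately show ?thesis
    unfolding cyl_poly_eq_multi_span_monomial by simp
qed

lemma hermite_multi_cyl_poly: "multi_index I \<Longrightarrow> cyl_poly (hermite_multi I)"
proof -
  have "cyl_poly (\<lambda>x. \<Prod>k\<in>S. poly (p k) (x k))" if "finite S" for S p
    using that
  proof (induction S rule: finite_induct)
    case empty
    then show ?case
      using cyl_poly_coordinate_poly[of "[:1:]" 0] by simp
  next
    case (insert k S)
    then show ?case
      using cyl_poly_mult[OF cyl_poly_coordinate_poly[of "p k" k] insert.IH] by simp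
  qed
  moreover have "hermite_multi I = (\<lambda>x. \<Prod>k\<in>supp I. poly (smult (1 / fact (I k)) (hermite_poly (I k))) (x k))"
    by (rule ext) (simp add: hermite_multi_def hermite_eq_poly)
  ultimately show "multi_index I \<Longrightarrow> cyl_poly (hermite_multi I)"
    unfolding multi_index_def by metis
qed

lemma cyl_poly_iff_hermite_span: "cyl_poly f \<longleftrightarrow> multi_span hermite_multi f"
proof
  assume "cyl_poly f"
  then obtain A c where A: "finite A" "\<forall>I\<in>A. multi_index I" "f = lincomb monomial A c"
    unfolding cyl_poly_eq_multi_span_monomial multi_span_def by blast
  then show "multi_span hermite_multi f"
    unfolding lincomb_def by (auto intro!: multi_span_lincomb monomial_in_hermite_span)
next
  assume "multi_span hermite_multi f"
  then obtain A c where A: "finite A" "\<forall>I\<in>A. multi_index I" "f = lincomb hermite_multi A c"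
    unfolding multi_span_def by blast
  have "multi_span monomial (\<lambda>x. \<Sum>I\<in>A. c I * hermite_multi I x)"
    using A hermite_multi_cyl_poly unfolding cyl_poly_eq_multi_span_monomial
    by (intro multi_span_lincomb) auto
  then show "cyl_poly f"
    unfolding cyl_poly_eq_multi_span_monomial A(3) lincomb_def[abs_def] .
qed

lemma lincomb_hermite_fun_upd:
  assumes "\<forall>I\<in>A. multi_index I"
  shows "lincomb hermite_multi A c (x(j := t)) =
    (\<Sum>I\<in>A. c I * hermite_multi (I(j := 0)) x * hermite (I j) t)"
  unfolding lincomb_def
proof (rule sum.cong[OF refl])
  fix I assume "I \<in> A"
  then show "c I * hermite_multi I (x(j := t)) = c I * hermite_multi (I(j := 0)) x * hermite (I j) t"
    using assms hermite_multi_split[of I "x(j := t)" j] by (simp add: hermite_multi_fun_upd_zero_indep)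
qed

lemma partial_lincomb_hermite:
  assumes "\<forall>I\<in>A. multi_index I"
  shows "partial j (lincomb hermite_multi A c) x =
    (\<Sum>I\<in>A. c I * hermite_multi (I(j := 0)) x * (poly (pderiv (hermite_poly (I j))) (x j) / fact (I j)))"
proof -
  have "((\<lambda>t. lincomb hermite_multi A c (x(j := t))) has_real_derivative
      (\<Sum>I\<in>A. c I * hermite_multi (I(j := 0)) x * (poly (pderiv (hermite_poly (I j))) (x j) / fact (I j))))
      (at (x j))"
    unfolding lincomb_hermite_fun_upd[OF assms]
    by (auto intro!: derivative_eq_intros hermite_has_real_derivative sum.cong)
  then show ?thesis
    unfolding partial_def by (rule DERIV_imp_deriv)
qed

lemma Dstar_lincomb_hermite:
  assumes "\<forall>I\<in>A. multi_index I"
  shows "Dstar a n (lincomb hermite_multi A c) x =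
    (\<Sum>k\<in>{k. a k \<noteq> 0}. \<Sum>I\<in>A. a k * c I * (of_nat (I (k + n)) + 1) * hermite_multi (raise_index I (k + n)) x)"
  unfolding Dstar_def
proof (rule sum.cong[OF refl])
  fix k
  define j where "j = k + n"
  have "- partial j (lincomb hermite_multi A c) x + x j * lincomb hermite_multi A c x =
      (\<Sum>I\<in>A. c I * hermite_multi (I(j := 0)) x *
        (x j * hermite (I j) (x j) - poly (pderiv (hermite_poly (I j))) (x j) / fact (I j)))"
    unfolding partial_lincomb_hermite[OF assms] lincomb_hermite_fun_upd[OF assms, of c x j "x j", simplified]
    by (simp add: sum_distrib_left sum_subtractf[symmetric] algebra_simps)
  also have "\<dots> = (\<Sum>I\<in>A. c I * (of_nat (I j) + 1) * hermite_multi (raise_index I j) x)"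
  proof (rule sum.cong[OF refl])
    fix I assume "I \<in> A"
    then show "c I * hermite_multi (I(j := 0)) x *
        (x j * hermite (I j) (x j) - poly (pderiv (hermite_poly (I j))) (x j) / fact (I j)) =
        c I * (of_nat (I j) + 1) * hermite_multi (raise_index I j) x"
      using assms unfolding hermite_raising raise_index_def
      by (simp add: hermite_multi_fun_upd[of I j "Suc (I j)" x])
  qed
  finally show "a k * (- partial (k + n) (lincomb hermite_multi A c) x + x (k + n) * lincomb hermite_multi A c x) =
      (\<Sum>I\<in>A. a k * c I * (of_nat (I (k + n)) + 1) * hermite_multi (raise_index I (k + n)) x)"
    unfolding j_def by (simp add: sum_distrib_left mult.assoc)
qed

section \<open>The Gaussian product measure\<close>

interpretation gauss_product: product_prob_space "\<lambda>_::int. std_gauss" "UNIV :: int set"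
  by (simp add: product_prob_space_def product_prob_space_axioms_def product_sigma_finite_def
      prob_space_std_gauss prob_space_imp_sigma_finite)

lemma nu0_eq_PiM: "nu0 = PiM (UNIV :: int set) (\<lambda>_. std_gauss)"
  by (simp add: nu0_def std_gauss_def)

lemma space_nu0 [simp]: "space nu0 = UNIV"
  by (simp add: nu0_eq_PiM space_PiM)

lemma prob_space_nu0: "prob_space nu0"
  unfolding nu0_eq_PiM by (rule gauss_product.P.prob_space_axioms)

lemma measurable_coordinate_nu0: "g \<in> borel_measurable borel \<Longrightarrow> (\<lambda>x. g (x n)) \<in> borel_measurable nu0"
  unfolding nu0_eq_PiM
  by (rule measurable_compose[OF measurable_component_singleton[of n UNIV "\<lambda>_. std_gauss"]])
     (simp_all cong: measurable_cong_sets)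

lemma borel_measurable_hermite_multi: "hermite_multi I \<in> borel_measurable nu0"
proof -
  have "continuous_on UNIV (hermite i)" for i
    unfolding hermite_eq_poly[abs_def] by (intro continuous_intros) auto
  then have "hermite i \<in> borel_measurable borel" for i
    by (rule borel_measurable_continuous_onI)
  then show ?thesis
    unfolding hermite_multi_def[abs_def] by (intro borel_measurable_prod measurable_coordinate_nu0)
qed

lemma
  fixes f :: "int \<Rightarrow> real \<Rightarrow> real"
  assumes S: "finite S" and f: "\<And>n. n \<in> S \<Longrightarrow> integrable std_gauss (f n)"
  shows integrable_prod_coordinates_nu0: "integrable nu0 (\<lambda>x. \<Prod>n\<in>S. f n (x n))"
    and integral_prod_coordinates_nu0: "(\<integral>x. (\<Prod>n\<in>S. f n (x n)) \<partial>nu0) = (\<Prod>n\<in>S. integral\<^sup>L std_gauss (f n))"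
proof -
  let ?P = "PiM S (\<lambda>_. std_gauss)"
  have restrict: "(\<lambda>x. restrict x S) \<in> measurable nu0 ?P"
    unfolding nu0_eq_PiM by (rule measurable_restrict_subset) simp
  have "(\<lambda>y. f n (y n)) \<in> borel_measurable ?P" if "n \<in> S" for n
    using measurable_compose[OF measurable_component_singleton[OF that] borel_measurable_integrable[OF f[OF that]]]
    by simp
  then have meas: "(\<lambda>y. \<Prod>n\<in>S. f n (y n)) \<in> borel_measurable ?P"
    by (rule borel_measurable_prod)
  have distr: "distr nu0 ?P (\<lambda>x. restrict x S) = ?P"
    unfolding nu0_eq_PiM by (rule gauss_product.distr_PiM_restrict_finite[OF S]) simp
  have restrict_prod: "(\<lambda>x. \<Prod>n\<in>S. f n (restrict x S n)) = (\<lambda>x. \<Prod>n\<in>S. f n (x n))"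
    by (intro ext prod.cong) auto
  show "integrable nu0 (\<lambda>x. \<Prod>n\<in>S. f n (x n))"
    using gauss_product.product_integrable_prod[OF S f] integrable_distr_eq[OF restrict meas]
    unfolding distr restrict_prod by simp
  show "(\<integral>x. (\<Prod>n\<in>S. f n (x n)) \<partial>nu0) = (\<Prod>n\<in>S. integral\<^sup>L std_gauss (f n))"
    using gauss_product.product_integral_prod[OF S f] integral_distr[OF restrict meas]
    unfolding distr restrict_prod by simp
qed

definition hermite_sqnorm :: "(int \<Rightarrow> nat) \<Rightarrow> real" where
  "hermite_sqnorm I = (\<Prod>n\<in>supp I. 1 / fact (I n))"

lemma hermite_sqnorm_pos: "hermite_sqnorm I > 0"
  unfolding hermite_sqnorm_def by (rule prod_pos) simp

lemma
  assumes I: "multi_index I" and J: "multi_index J"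
  shows integrable_hermite_multi_mult: "integrable nu0 (\<lambda>x. hermite_multi I x * hermite_multi J x)"
    and hermite_multi_orthogonal:
      "(\<integral>x. hermite_multi I x * hermite_multi J x \<partial>nu0) = (if I = J then hermite_sqnorm I else 0)"
proof -
  define S where "S = supp I \<union> supp J"
  have S: "finite S"
    using I J by (simp add: S_def multi_index_def)
  have eq: "(\<lambda>x. hermite_multi I x * hermite_multi J x) = (\<lambda>x. \<Prod>n\<in>S. hermite (I n) (x n) * hermite (J n) (x n))"
    using hermite_multi_eq_prod_superset[OF S, of I] hermite_multi_eq_prod_superset[OF S, of J]
    by (auto simp: S_def prod.distrib)
  have int: "integrable std_gauss (\<lambda>t. hermite i t * hermite j t)" for i j
    unfolding hermite_eq_poly by (simp flip: poly_mult add: integrable_divide_zero)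
  show "integrable nu0 (\<lambda>x. hermite_multi I x * hermite_multi J x)"
    unfolding eq using int by (intro integrable_prod_coordinates_nu0[OF S])
  have "(\<integral>x. hermite_multi I x * hermite_multi J x \<partial>nu0) = (\<Prod>n\<in>S. if I n = J n then 1 / fact (I n) else 0)"
    unfolding eq integral_prod_coordinates_nu0[OF S int] by (simp add: hermite_orthogonal)
  also have "\<dots> = (if I = J then hermite_sqnorm I else 0)"
  proof (cases "I = J")
    case True
    then show ?thesis
      unfolding hermite_sqnorm_def S_def by simp
  next
    case False
    then obtain n where n: "I n \<noteq> J n" by auto
    then have "n \<in> S" by (auto simp: S_def supp_def)
    then show ?thesis
      using False n S by (auto simp: prod_zero_iff)
  qed
  finally show "(\<integral>x. hermite_multi I x * hermite_multi J x \<partial>nu0) = (if I = J then hermite_sqnorm I else 0)" .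
qed

lemma square_integrable_hermite_multi: "multi_index I \<Longrightarrow> square_integrable nu0 (hermite_multi I)"
  using integrable_hermite_multi_mult[of I I] borel_measurable_hermite_multi
  by (simp add: square_integrable_def power2_eq_square)

lemma L2_eq_square_integrable: "L2 = square_integrable nu0"
  by (intro ext) (simp add: L2_def square_integrable_def)

interpretation hermite_basis: orthogonal_family nu0 hermite_multi "{I. multi_index I}"
proof (intro orthogonal_family.intro orthogonal_family_axioms.intro)
  show "finite_measure nu0"
    using prob_space_nu0 by (rule prob_space.finite_measure)
qed (auto simp: square_integrable_hermite_multi hermite_multi_orthogonal power2_eq_square hermite_sqnorm_pos)

lemma measurable_shift_coordinates: "(\<lambda>x n. x (n + m)) \<in> measurable nu0 nu0"
  unfolding nu0_eq_PiM by (rule measurable_PiM_single') (auto simp: space_PiM)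

lemma distr_shift_coordinates_nu0: "distr nu0 nu0 (\<lambda>x n. x (n + m)) = nu0"
proof -
  have "distr (PiM UNIV (\<lambda>_::int. std_gauss)) (PiM UNIV (\<lambda>_. std_gauss)) (\<lambda>x. \<lambda>n\<in>UNIV. x (n + m)) =
      PiM UNIV (\<lambda>_. std_gauss)"
    by (rule distr_PiM_reindex) (auto simp: prob_space_std_gauss inj_on_def)
  then show ?thesis
    by (simp add: nu0_eq_PiM restrict_def)
qed

lemma
  assumes "f \<in> borel_measurable nu0"
  shows measurable_shift: "shift m f \<in> borel_measurable nu0"
    and integral_shift: "integral\<^sup>L nu0 (shift m f) = integral\<^sup>L nu0 f"
    and integrable_shift_iff: "integrable nu0 (shift m f) \<longleftrightarrow> integrable nu0 f"
  using measurable_compose[OF measurable_shift_coordinates assms]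
    integral_distr[OF measurable_shift_coordinates assms] integrable_distr_eq[OF measurable_shift_coordinates assms]
  unfolding shift_def[abs_def] distr_shift_coordinates_nu0 by simp_all

lemma square_integrable_shift: "square_integrable nu0 f \<Longrightarrow> square_integrable nu0 (shift m f)"
proof -
  assume f: "square_integrable nu0 f"
  have "(\<lambda>x. (shift m f x)\<^sup>2) = shift m (\<lambda>x. (f x)\<^sup>2)"
    by (rule ext) (simp add: shift_def)
  moreover have "(\<lambda>x. (f x)\<^sup>2) \<in> borel_measurable nu0"
    using f by (simp add: square_integrable_def borel_measurable_power)
  ultimately show ?thesis
    using f integrable_shift_iff[of "\<lambda>x. (f x)\<^sup>2" m] measurable_shift[of f m]
    by (simp add: square_integrable_def)
qed

definition shift_index :: "int \<Rightarrow> (int \<Rightarrow> nat) \<Rightarrow> int \<Rightarrow> nat" where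
  "shift_index m I = (\<lambda>k. I (k - m))"

lemma supp_shift_index: "supp (shift_index m I) = (\<lambda>n. n + m) ` supp I"
  by (force simp: supp_def shift_index_def image_iff)

lemma multi_index_shift_index [simp]: "multi_index I \<Longrightarrow> multi_index (shift_index m I)"
  by (simp add: multi_index_def supp_shift_index)

lemma degree_shift_index [simp]: "Defs.degree (shift_index m I) = Defs.degree I"
  unfolding degree_def supp_shift_index by (subst sum.reindex) (auto simp: inj_on_def shift_index_def)

lemma shift_hermite_multi: "shift m (hermite_multi I) = hermite_multi (shift_index m I)"
proof
  fix x
  have "hermite_multi (shift_index m I) x = (\<Prod>k\<in>(\<lambda>n. n + m) ` supp I. hermite (I (k - m)) (x k))"
    unfolding hermite_multi_def supp_shift_index by (simp add: shift_index_def)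
  also have "\<dots> = (\<Prod>n\<in>supp I. hermite (I n) (x (n + m)))"
    by (subst prod.reindex) (auto simp: inj_on_def)
  finally show "shift m (hermite_multi I) x = hermite_multi (shift_index m I) x"
    by (simp add: shift_def hermite_multi_def)
qed

lemma integral_shift_mult_hermite_multi:
  assumes "f \<in> borel_measurable nu0"
  shows "(\<integral>x. shift m f x * hermite_multi J x \<partial>nu0) = (\<integral>x. f x * hermite_multi (shift_index (- m) J) x \<partial>nu0)"
proof -
  have "hermite_multi J = shift m (hermite_multi (shift_index (- m) J))"
    by (simp add: shift_hermite_multi shift_index_def)
  then have "(\<lambda>x. shift m f x * hermite_multi J x) = shift m (\<lambda>x. f x * hermite_multi (shift_index (- m) J) x)"
    by (simp add: shift_def fun_eq_iff)
  then show ?thesis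
    using assms borel_measurable_hermite_multi by (simp add: integral_shift)
qed

section \<open>Projections onto the spaces of fixed degree\<close>

lemma integral_proj_mult_hermite_multi:
  assumes P: "is_proj N xi P" and xi: "L2 xi" and J: "multi_index J"
  shows "(\<integral>x. P x * hermite_multi J x \<partial>nu0) =
    (if Defs.degree J = N then (\<integral>x. xi x * hermite_multi J x \<partial>nu0) else 0)"
proof -
  have LP: "square_integrable nu0 P" and HJ: "square_integrable nu0 (hermite_multi J)"
    using P J by (simp_all add: is_proj_def L2_eq_square_integrable square_integrable_hermite_multi)
  show ?thesis
  proof (cases "Defs.degree J = N")
    case True
    have "(\<integral>x. (xi x - P x) * hermite_multi J x \<partial>nu0) = 0"
      using P J True unfolding is_proj_def by blast
    then show ?thesis
      using True xi LP HJ
      by (simp add: left_diff_distrib integrable_mult_square_integrable L2_eq_square_integrable)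
  next
    case False
    have "(\<integral>x. P x * hermite_multi J x \<partial>nu0) = 0"
    proof (rule integral_mult_eq_of_approx[OF LP HJ])
      fix \<epsilon> :: real assume "\<epsilon> > 0"
      then obtain A c where A: "finite A" "\<forall>I\<in>A. multi_index I \<and> Defs.degree I = N"
        and err: "(\<integral>x. (P x - lincomb hermite_multi A c x)\<^sup>2 \<partial>nu0) < \<epsilon>"
        using P unfolding is_proj_def lincomb_def by blast
      moreover have "(\<integral>x. lincomb hermite_multi A c x * hermite_multi J x \<partial>nu0) = 0"
        using A J False by (subst hermite_basis.integral_lincomb_mult_family) auto
      moreover have "square_integrable nu0 (lincomb hermite_multi A c)"
        using A by (intro square_integrable_lincomb square_integrable_hermite_multi) auto
      ultimately show "\<exists>g. square_integrable nu0 g \<and> (\<integral>x. (P x - g x)\<^sup>2 \<partial>nu0) < \<epsilon> \<and>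
          (\<integral>x. g x * hermite_multi J x \<partial>nu0) = 0"
        by blast
    qed
    then show ?thesis
      using False by simp
  qed
qed

lemma integral_shift_proj_mult_hermite_multi:
  assumes P: "is_proj N xi P" and xi: "L2 xi" and J: "multi_index J"
  shows "(\<integral>x. shift m P x * hermite_multi J x \<partial>nu0) =
    (if Defs.degree J = N then (\<integral>x. shift m xi x * hermite_multi J x \<partial>nu0) else 0)"
proof -
  have "P \<in> borel_measurable nu0" "xi \<in> borel_measurable nu0"
    using P xi by (simp_all add: is_proj_def L2_def)
  then show ?thesis
    using integral_proj_mult_hermite_multi[OF P xi, of "shift_index (- m) J"] J
    by (simp add: integral_shift_mult_hermite_multi)
qed

lemma finite_multi_indices_supp_bounded:
  "finite {I. Defs.degree I = N \<and> supp I \<subseteq> {- int k..int k}}"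
proof (rule finite_subset)
  show "{I. Defs.degree I = N \<and> supp I \<subseteq> {- int k..int k}} \<subseteq>
      {I. \<forall>n. (n \<in> {- int k..int k} \<longrightarrow> I n \<in> {0..N}) \<and> (n \<notin> {- int k..int k} \<longrightarrow> I n = 0)}"
  proof safe
    fix I n assume I: "supp I \<subseteq> {- int k..int k}" and N: "N = Defs.degree I"
    show "I n = 0" if "n \<notin> {- int k..int k}"
      using I that by (auto simp: supp_def)
    have "finite (supp I)"
      using I by (rule finite_subset) simp
    then have "I n \<le> Defs.degree I"
      by (cases "n \<in> supp I") (auto simp: degree_def supp_def intro: member_le_sum)
    then show "I n \<in> {0..Defs.degree I}"
      by simp
  qed
  show "finite {I. \<forall>n. (n \<in> {- int k..int k} \<longrightarrow> I n \<in> {0..N}) \<and> (n \<notin> {- int k..int k} \<longrightarrow> I n = 0)}"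
    by (rule finite_set_of_finite_funs) auto
qed

lemma multi_index_supp_bounded:
  assumes "multi_index J"
  obtains k where "supp J \<subseteq> {- int k..int k}"
proof
  define M where "M = Max (insert 0 (abs ` supp J))"
  have "finite (supp J)"
    using assms by (simp add: multi_index_def)
  then have "\<bar>n\<bar> \<le> M" if "n \<in> supp J" for n
    using that by (auto simp: M_def intro: Max_ge)
  moreover have "0 \<le> M"
    using \<open>finite (supp J)\<close> by (simp add: M_def)
  ultimately show "supp J \<subseteq> {- int (nat M)..int (nat M)}"
    by (force simp: abs_le_iff)
qed

lemma is_proj_exists:
  assumes xi: "L2 xi"
  shows "\<exists>P. is_proj N xi P"
proof -
  define F where "F k = {I. Defs.degree I = N \<and> supp I \<subseteq> {- int k..int k}}" for k
  have F: "finite (F k)" "F k \<subseteq> {I. multi_index I}" for k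
    using finite_multi_indices_supp_bounded[of N k] by (auto simp: F_def multi_index_def intro: finite_subset)
  have "incseq F"
    by (force simp: incseq_def F_def)
  then obtain P where P: "square_integrable nu0 P"
    and approx: "\<And>\<epsilon>. \<epsilon> > 0 \<Longrightarrow> \<exists>k c. (\<integral>x. (P x - lincomb hermite_multi (F k) c x)\<^sup>2 \<partial>nu0) < \<epsilon>"
    and orth: "\<And>J k. J \<in> F k \<Longrightarrow> (\<integral>x. (xi x - P x) * hermite_multi J x \<partial>nu0) = 0"
    using hermite_basis.orthogonal_projection_exists[OF xi[unfolded L2_eq_square_integrable] F \<open>incseq F\<close>]
    by blast
  have "is_proj N xi P"
    unfolding is_proj_def
  proof (intro conjI allI impI)
    show "L2 P"
      using P by (simp add: L2_eq_square_integrable)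
    show "\<exists>A c. finite A \<and> (\<forall>I\<in>A. multi_index I \<and> Defs.degree I = N) \<and>
        (\<integral>x. (P x - (\<Sum>I\<in>A. c I * hermite_multi I x))\<^sup>2 \<partial>nu0) < \<epsilon>" if pos: "\<epsilon> > 0" for \<epsilon>
    proof -
      obtain k c where "(\<integral>x. (P x - lincomb hermite_multi (F k) c x)\<^sup>2 \<partial>nu0) < \<epsilon>"
        using approx[OF pos] by blast
      moreover have "\<forall>I\<in>F k. multi_index I \<and> Defs.degree I = N"
        using F(2) by (auto simp: F_def)
      ultimately show ?thesis
        using F(1) unfolding lincomb_def by blast
    qed
    show "(\<integral>x. (xi x - P x) * hermite_multi J x \<partial>nu0) = 0" if J: "multi_index J \<and> Defs.degree J = N" for J
    proof -
      obtain k where "supp J \<subseteq> {- int k..int k}"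
        using J multi_index_supp_bounded by blast
      then have "J \<in> F k"
        using J by (simp add: F_def)
      then show ?thesis
        by (rule orth)
    qed
  qed
  then show ?thesis by blast
qed

section \<open>Closedness degree by degree\<close>

lemma integral_mult_Dstar_lincomb_hermite:
  assumes f: "square_integrable nu0 f" and A: "\<forall>I\<in>A. multi_index I"
  shows "(\<integral>x. f x * Dstar a n (lincomb hermite_multi A c) x \<partial>nu0) =
    (\<Sum>k\<in>{k. a k \<noteq> 0}. \<Sum>I\<in>A. a k * c I * (of_nat (I (k + n)) + 1) *
        (\<integral>x. f x * hermite_multi (raise_index I (k + n)) x \<partial>nu0))"
proof -
  have "(\<lambda>x. f x * Dstar a n (lincomb hermite_multi A c) x) = (\<lambda>x. \<Sum>k\<in>{k. a k \<noteq> 0}. \<Sum>I\<in>A.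
      a k * c I * (of_nat (I (k + n)) + 1) * (f x * hermite_multi (raise_index I (k + n)) x))"
    by (simp add: Dstar_lincomb_hermite[OF A] sum_distrib_left algebra_simps)
  moreover have "integrable nu0 (\<lambda>x. f x * hermite_multi (raise_index I j) x)" if "I \<in> A" for I j
    using A that by (intro integrable_mult_square_integrable f square_integrable_hermite_multi) simp
  ultimately show ?thesis
    by (simp add: Bochner_Integration.integral_sum)
qed

lemma integral_shift_proj_mult_Dstar:
  assumes P: "is_proj N xi P" and xi: "L2 xi" and A: "finite A" "\<forall>I\<in>A. multi_index I"
  shows "(\<integral>x. shift m P x * Dstar a n (lincomb hermite_multi A c) x \<partial>nu0) =
    (\<integral>x. shift m xi x * Dstar a n (lincomb hermite_multi {I\<in>A. Suc (Defs.degree I) = N} c) x \<partial>nu0)"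
proof -
  have sq: "square_integrable nu0 (shift m P)" "square_integrable nu0 (shift m xi)"
    using P xi by (simp_all add: is_proj_def L2_eq_square_integrable square_integrable_shift)
  have A': "\<forall>I\<in>{I\<in>A. Suc (Defs.degree I) = N}. multi_index I"
    using A by simp
  show ?thesis
    unfolding integral_mult_Dstar_lincomb_hermite[OF sq(1) A(2)]
      integral_mult_Dstar_lincomb_hermite[OF sq(2) A'] sum.inter_filter[OF A(1)]
    using A(2) by (auto intro!: sum.cong simp: integral_shift_proj_mult_hermite_multi[OF P xi] degree_raise_index)
qed

lemma integral_shift_mult_Dstar_eq_sum_proj:
  assumes P: "\<And>N. is_proj N xi (P N)" and xi: "L2 xi" and A: "finite A" "\<forall>I\<in>A. multi_index I"
    and d: "\<forall>I\<in>A. Suc (Defs.degree I) \<le> d"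
  shows "(\<integral>x. shift m xi x * Dstar a n (lincomb hermite_multi A c) x \<partial>nu0) =
    (\<Sum>N\<le>d. \<integral>x. shift m (P N) x * Dstar a n (lincomb hermite_multi A c) x \<partial>nu0)"
proof -
  define t where "t k I = a k * c I * (of_nat (I (k + n)) + 1) *
      (\<integral>x. shift m xi x * hermite_multi (raise_index I (k + n)) x \<partial>nu0)" for k I
  have sq: "square_integrable nu0 (shift m xi)"
    using xi by (simp add: L2_eq_square_integrable square_integrable_shift)
  have A': "\<forall>I\<in>{I\<in>A. Suc (Defs.degree I) = N}. multi_index I" for N
    using A by simp
  have "(\<Sum>N\<le>d. \<integral>x. shift m (P N) x * Dstar a n (lincomb hermite_multi A c) x \<partial>nu0) =
      (\<Sum>N\<le>d. \<Sum>k\<in>{k. a k \<noteq> 0}. \<Sum>I\<in>{I\<in>A. Suc (Defs.degree I) = N}. t k I)"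
    unfolding integral_shift_proj_mult_Dstar[OF P xi A] integral_mult_Dstar_lincomb_hermite[OF sq A'] t_def ..
  also have "\<dots> = (\<Sum>k\<in>{k. a k \<noteq> 0}. \<Sum>N\<le>d. \<Sum>I\<in>{I\<in>A. Suc (Defs.degree I) = N}. t k I)"
    by (rule sum.swap)
  also have "\<dots> = (\<Sum>k\<in>{k. a k \<noteq> 0}. \<Sum>I\<in>A. t k I)"
    using A(1) d by (intro sum.cong refl sum.group) auto
  also have "\<dots> = (\<integral>x. shift m xi x * Dstar a n (lincomb hermite_multi A c) x \<partial>nu0)"
    unfolding integral_mult_Dstar_lincomb_hermite[OF sq A(2)] t_def ..
  finally show ?thesis ..
qed

lemma D0_closed_proj:
  assumes closed: "D0_closed a xi" and P: "is_proj N xi P" and xi: "L2 xi"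
  shows "D0_closed a P"
  unfolding D0_closed_def
proof (intro allI impI)
  fix m n \<phi> assume "cyl_poly \<phi>"
  then obtain A c where A: "finite A" "\<forall>I\<in>A. multi_index I" and \<phi>: "\<phi> = lincomb hermite_multi A c"
    unfolding cyl_poly_iff_hermite_span multi_span_def by blast
  have "cyl_poly (lincomb hermite_multi {I\<in>A. Suc (Defs.degree I) = N} c)"
    unfolding cyl_poly_iff_hermite_span multi_span_def
    by (intro exI[of _ "{I\<in>A. Suc (Defs.degree I) = N}"] exI[of _ c]) (use A in auto)
  then show "(\<integral>x. shift m P x * Dstar a n \<phi> x \<partial>nu0) = (\<integral>x. shift n P x * Dstar a m \<phi> x \<partial>nu0)"
    using closed unfolding \<phi> integral_shift_proj_mult_Dstar[OF P xi A] D0_closed_def by blast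
qed

lemma D0_closed_if_projs_closed:
  assumes P: "\<And>N. is_proj N xi (P N)" and closed: "\<And>N. D0_closed a (P N)" and xi: "L2 xi"
  shows "D0_closed a xi"
  unfolding D0_closed_def
proof (intro allI impI)
  fix m n \<phi> assume "cyl_poly \<phi>"
  then obtain A c where A: "finite A" "\<forall>I\<in>A. multi_index I" and \<phi>: "\<phi> = lincomb hermite_multi A c"
    unfolding cyl_poly_iff_hermite_span multi_span_def by blast
  define d where "d = Suc (Max (Defs.degree ` A))"
  have d: "\<forall>I\<in>A. Suc (Defs.degree I) \<le> d"
    using A(1) by (simp add: d_def)
  show "(\<integral>x. shift m xi x * Dstar a n \<phi> x \<partial>nu0) = (\<integral>x. shift n xi x * Dstar a m \<phi> x \<partial>nu0)"
    using closed \<open>cyl_poly \<phi>\<close> unfolding \<phi> integral_shift_mult_Dstar_eq_sum_proj[OF P xi A d] D0_closed_def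
    by simp
qed

theorem lemma4p1:
  fixes a :: "int \<Rightarrow> real" and xi :: "(int \<Rightarrow> real) \<Rightarrow> real"
  assumes "finite {k. a k \<noteq> 0}" and "L2 xi"
  shows "D0_closed a xi \<longleftrightarrow> (\<forall>N P. is_proj N xi P \<longrightarrow> D0_closed a P)"
proof
  show "D0_closed a xi \<Longrightarrow> \<forall>N P. is_proj N xi P \<longrightarrow> D0_closed a P"
    using D0_closed_proj \<open>L2 xi\<close> by blast
next
  assume closed: "\<forall>N P. is_proj N xi P \<longrightarrow> D0_closed a P"
  obtain P where "\<And>N. is_proj N xi (P N)"
    using is_proj_exists[OF \<open>L2 xi\<close>] by metis
  then show "D0_closed a xi"
    using D0_closed_if_projs_closed closed \<open>L2 xi\<close> by blast
qed

end
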